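(* In the setting of short geodesics, for all sufficiently small $s>0$, $$0<\tau(0,y,\sigma_s)\le C \quad\text{and}\quad 0<l(\gamma_s)=s\,\tau(0,y,\sigma_s)\le Cs,$$ where $C$ depends only on the metric $h$.
   Context: Gas giant setting. $M$ is a compact manifold with boundary, $\dim M=n\ge 2$, and $g=\rho^{-1}\bar g$ with $\bar g$ smooth up to the boundary and $\rho$ a boundary defining function. Near $\partial M$ there are coordinates $(x,y)$ in which $g=\mathrm{d}x^2+x^{-2}h(x,y,\mathrm{d}y)$, with $h_x$ a family of metrics on $\partial M$ smooth in $x$ up to $x=0$. Dual coordinates are $(\xi,\eta)$. Geodesic flow. $\phi_t$ is the Hamiltonian flow of $H=\tfrac12\xi^2+\tfrac12x^2h^{ij}\eta_i\eta_j$: - $\dot x=\xi$, - $\dot y^i=x^2h^{ij}\eta_j$, - $\dot\xi=-xh^{ij}\eta_i\eta_j-\tfrac12x^2\partial_xh^{ij}\eta_i\eta_j$, - $\dot\eta_i=-\tfrac12x^2\partial_{y^i}h^{kj}\eta_k\eta_j$. Short geodesics. Fix $y\in\partial M$ and $\eta\in T^*_y\partial M$ with $h^{ij}(0,y)\eta_i\eta_j=1$. For $s>0$ let $\sigma_s=(s,\eta)$, i.e. $\xi=s$, and $\gamma_s(t)=\phi_t(0,y,\sigma_s)$. Here $\tau(0,y,\sigma_s)$ is the first positive time at which $x$ returns to $0$, and $l(\gamma_s)$ is the $g$-length of the projected curve; the speed is constant equal to $s$. *)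

theory Defs
  imports "HOL-Analysis.Analysis"
begin

text \<open>Smoothness (C-infinity) up to the boundary with uniformly bounded derivatives of
all orders on S.  F vs z is the iterated derivative of f at z in the directions vs
(innermost direction last); each F vs is continuous and differentiable within S, with
derivative w mapsto F (w # vs) z.\<close>
definition smooth_bdd_on :: "'a::real_normed_vector set \<Rightarrow> ('a \<Rightarrow> real) \<Rightarrow> bool" where
  "smooth_bdd_on S f \<longleftrightarrow>
     (\<exists>F :: 'a list \<Rightarrow> 'a \<Rightarrow> real.
        (\<forall>z\<in>S. F [] z = f z) \<and>
        (\<forall>vs. continuous_on S (F vs)) \<and>
        (\<forall>vs. \<forall>z\<in>S. (F vs has_derivative (\<lambda>w. F (w # vs) z)) (at z within S)) \<and>
        (\<forall>vs. \<exists>B. \<forall>z\<in>S. \<bar>F vs z\<bar> \<le> B * prod_list (map norm vs)))"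

text \<open>Collar model of the gas giant metric: h x y is the matrix (h_ij) of the metric h_x on
the boundary at the point y (boundary coordinates in real^'n), for 0 <= x <= x0.
Symmetric, uniformly positive definite, smooth up to x = 0 with bounded derivatives
(local model of compactness of the boundary).\<close>
definition gas_giant_family :: "(real \<Rightarrow> real^'n \<Rightarrow> real^'n^'n) \<Rightarrow> real \<Rightarrow> bool" where
  "gas_giant_family h x0 \<longleftrightarrow>
     0 < x0 \<and>
     (\<forall>x\<in>{0..x0}. \<forall>y. transpose (h x y) = h x y) \<and>
     (\<exists>c>0. \<forall>x\<in>{0..x0}. \<forall>y v. c * (norm v)^2 \<le> v \<bullet> (h x y *v v)) \<and>
     (\<forall>i j. smooth_bdd_on ({0..x0} \<times> UNIV) (\<lambda>(x, y). h x y $ i $ j))"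

definition cometric :: "(real \<Rightarrow> real^'n \<Rightarrow> real^'n^'n) \<Rightarrow> real \<Rightarrow> real^'n \<Rightarrow> real^'n^'n" where
  "cometric h x y = matrix_inv (h x y)"

definition conorm2 :: "(real \<Rightarrow> real^'n \<Rightarrow> real^'n^'n) \<Rightarrow> real \<Rightarrow> real^'n \<Rightarrow> real^'n \<Rightarrow> real" where
  "conorm2 h x y \<eta> = \<eta> \<bullet> (cometric h x y *v \<eta>)"

text \<open>(X, Y, Xi, E) solves Hamilton's equations for H = xi^2/2 + x^2 h^ij eta_i eta_j / 2
on the time interval [0, T].\<close>
definition geodesic_flow_curve ::
  "(real \<Rightarrow> real^'n \<Rightarrow> real^'n^'n) \<Rightarrow> (real \<Rightarrow> real) \<Rightarrow> (real \<Rightarrow> real^'n)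
     \<Rightarrow> (real \<Rightarrow> real) \<Rightarrow> (real \<Rightarrow> real^'n) \<Rightarrow> real \<Rightarrow> bool" where
  "geodesic_flow_curve h X Y Xi E T \<longleftrightarrow> 0 \<le> T \<and>
     (\<forall>t\<in>{0..T}.
        (X has_real_derivative Xi t) (at t within {0..T}) \<and>
        (Y has_vector_derivative ((X t)^2 *\<^sub>R (cometric h (X t) (Y t) *v E t))) (at t within {0..T}) \<and>
        (\<exists>dx dy.
           ((\<lambda>x. conorm2 h x (Y t) (E t)) has_real_derivative dx) (at (X t) within {0..}) \<and>
           ((\<lambda>y. conorm2 h (X t) y (E t)) has_derivative (\<lambda>v. dy \<bullet> v)) (at (Y t)) \<and>
           (Xi has_real_derivative
              (- (X t * conorm2 h (X t) (Y t) (E t)) - 1/2 * (X t)^2 * dx)) (at t within {0..T}) \<and>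
           (E has_vector_derivative (- (1/2 * (X t)^2) *\<^sub>R dy)) (at t within {0..T})))"

text \<open>g-length of the projected curve t mapsto (X t, Y t), t in [0,T], for
g = dx^2 + x^(-2) h(x, y, dy).\<close>
definition g_length_is ::
  "(real \<Rightarrow> real^'n \<Rightarrow> real^'n^'n) \<Rightarrow> (real \<Rightarrow> real) \<Rightarrow> (real \<Rightarrow> real^'n) \<Rightarrow> real \<Rightarrow> real \<Rightarrow> bool" where
  "g_length_is h X Y T L \<longleftrightarrow>
     ((\<lambda>t. sqrt ((vector_derivative X (at t within {0..T}))^2
          + (vector_derivative Y (at t within {0..T})) \<bullet>
              (h (X t) (Y t) *v vector_derivative Y (at t within {0..T})) / (X t)^2))
       has_integral L) {0..T}"

end

(*
  In the variables u = x/s, v = xi/s the flow reads u' = v, v' = -u q, where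
  q = h^ij(su,y) eta_i eta_j + (su/2) d_x h^ij eta_i eta_j, while y and eta move only
  at rate O(s^2).  Hence q = 1 + O(s) on [0, 4], and a Gronwall estimate for
  (u - sin)^2 + (v - cos)^2 keeps (u, v) within 1/10 of (sin, cos).  So x = s u is
  positive until a first zero tau in [pi - 1/2, pi + 1/2], and tau <= 4.  Conservation
  of xi^2 + x^2 |eta|_h^2 = s^2 says that the g-speed is s, so the length is s tau.
  A solution exists because, after clamping the coefficients outside the collar and
  away from the initial covector, the rescaled field is globally Lipschitz (Picard
  iteration); the clamps are inactive up to time tau.
*)

theory Submission
  imports Defs
begin

section \<open>Picard iteration for globally Lipschitz fields\<close>

lemma ex_power_div_fact_less_1: "\<exists>k. (a::real)^k / fact k < 1"
proof -
  have "(\<lambda>n. inverse (fact n) * a^n) \<longlonglongrightarrow> 0"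
    using summable_LIMSEQ_zero[OF summable_exp[of a]] by simp
  then have "\<forall>\<^sub>F n in sequentially. inverse (fact n) * a^n < 1"
    by (rule order_tendstoD) simp
  then obtain k where "inverse (fact k) * a^k < 1"
    by (auto simp: eventually_sequentially)
  then show ?thesis
    by (auto simp: divide_inverse mult.commute)
qed

lemma has_integral_power_div_fact:
  fixes L t D :: real
  assumes "0 \<le> t"
  shows "((\<lambda>r. L * ((L * r)^k / fact k * D)) has_integral (L * t)^Suc k / fact (Suc k) * D) {0..t}"
proof -
  define c where "c = L^Suc k * D / fact (Suc k)"
  have integrand: "L * ((L * r)^k / fact k * D) = c * (real (Suc k) * r^k)" for r
  proof -
    have "fact (Suc k) = real (Suc k) * (fact k::real)"
      by simp
    then show ?thesis
      unfolding c_def by (simp add: power_mult_distrib field_simps del: of_nat_Suc)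
  qed
  have "((\<lambda>r. c * r^Suc k) has_real_derivative c * (real (Suc k) * r^k)) (at r within {0..t})" for r
    using DERIV_cmult[OF DERIV_pow[of "Suc k" r], of c] by (simp add: has_field_derivative_at_within)
  then have "((\<lambda>r. c * (real (Suc k) * r^k)) has_integral c * t^Suc k - c * 0^Suc k) {0..t}"
    by (intro fundamental_theorem_of_calculus assms)
       (simp add: has_real_derivative_iff_has_vector_derivative)
  moreover have "c * t^Suc k - c * 0^Suc k = (L * t)^Suc k / fact (Suc k) * D"
    by (simp add: c_def power_mult_distrib)
  ultimately show ?thesis
    by (simp only: integrand)
qed

text \<open>The Picard map, with the time variable clamped to \<open>[0, T]\<close> so that
  it acts on bounded continuous functions on the whole line.\<close>

definition picard_step :: "('a::banach \<Rightarrow> 'a) \<Rightarrow> 'a \<Rightarrow> real \<Rightarrow> (real \<Rightarrow>\<^sub>C 'a) \<Rightarrow> (real \<Rightarrow>\<^sub>C 'a)"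
  where "picard_step f z0 T \<phi> = Bcontfun (\<lambda>t. z0 + integral {0..clamp 0 T t} (\<lambda>r. f (\<phi> r)))"

context
  fixes f :: "'a::banach \<Rightarrow> 'a" and L T :: real and z0 :: 'a
  assumes lipschitz: "L-lipschitz_on UNIV f" and T_nonneg: "0 \<le> T"
begin

private lemma continuous_on_field_along:
  "continuous_on UNIV \<phi> \<Longrightarrow> continuous_on S (\<lambda>r. f (\<phi> r))"
  using continuous_on_compose[of UNIV \<phi> f] lipschitz_on_continuous_on[OF lipschitz]
  by (auto simp: o_def intro: continuous_on_subset)

private lemma integrable_picard:
  "continuous_on UNIV \<phi> \<Longrightarrow> (\<lambda>r. f (\<phi> r)) integrable_on {0..t::real}"
  by (intro integrable_continuous_interval continuous_on_field_along)

private lemma picard_integral_bcontfun: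
  assumes "continuous_on UNIV \<phi>"
  shows "(\<lambda>t. z0 + integral {0..clamp 0 T t} (\<lambda>r. f (\<phi> r))) \<in> bcontfun"
proof -
  define I where "I s = z0 + integral {0..s} (\<lambda>r. f (\<phi> r))" for s
  have cont_I: "continuous_on {0..T} I"
    unfolding I_def by (intro continuous_intros indefinite_integral_continuous_1 integrable_picard assms)
  have clamp_in: "clamp 0 T t \<in> {0..T}" for t
    using T_nonneg clamp_in_interval[of 0 T t] by simp
  have "continuous_on UNIV (\<lambda>t. I (clamp 0 T t))"
    using clamp_continuous_on[of 0 T I] cont_I T_nonneg by simp
  moreover have "range (\<lambda>t. I (clamp 0 T t)) \<subseteq> I ` {0..T}"
    using clamp_in by auto
  then have "bounded (range (\<lambda>t. I (clamp 0 T t)))"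
    by (meson bounded_subset compact_continuous_image[OF cont_I compact_Icc] compact_imp_bounded)
  ultimately show ?thesis
    by (simp add: bcontfun_def I_def)
qed

private lemma picard_step_apply:
  "apply_bcontfun (picard_step f z0 T \<phi>) t = z0 + integral {0..clamp 0 T t} (\<lambda>r. f (\<phi> r))"
  unfolding picard_step_def
  using Bcontfun_inverse[OF picard_integral_bcontfun[OF continuous_on_apply_bcontfun]] by simp

private lemma picard_iterate_dist_le:
  "t \<in> {0..T} \<Longrightarrow>
    norm (apply_bcontfun (((picard_step f z0 T)^^k) \<phi>) t - apply_bcontfun (((picard_step f z0 T)^^k) \<psi>) t)
     \<le> (L * t)^k / fact k * dist \<phi> \<psi>"
proof (induction k arbitrary: t)
  case 0
  then show ?case
    using dist_bounded[of \<phi> t \<psi>] by (simp add: dist_norm)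
next
  case (Suc k)
  define a where "a = apply_bcontfun (((picard_step f z0 T)^^k) \<phi>)"
  define b where "b = apply_bcontfun (((picard_step f z0 T)^^k) \<psi>)"
  have int_a: "(\<lambda>r. f (a r)) integrable_on {0..t}" and int_b: "(\<lambda>r. f (b r)) integrable_on {0..t}"
    unfolding a_def b_def by (auto intro: integrable_picard)
  have "apply_bcontfun (((picard_step f z0 T)^^Suc k) \<phi>) t - apply_bcontfun (((picard_step f z0 T)^^Suc k) \<psi>) t
      = integral {0..t} (\<lambda>r. f (a r) - f (b r))"
    using Suc.prems int_a int_b
    by (simp add: picard_step_apply a_def b_def clamp_cancel_cbox integral_diff)
  also have "norm \<dots> \<le> integral {0..t} (\<lambda>r. L * ((L * r)^k / fact k * dist \<phi> \<psi>))"
  proof (rule integral_norm_bound_integral)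
    show "(\<lambda>r. f (a r) - f (b r)) integrable_on {0..t}"
      using int_a int_b by (rule integrable_diff)
    show "(\<lambda>r. L * ((L * r)^k / fact k * dist \<phi> \<psi>)) integrable_on {0..t}"
      by (intro integrable_continuous_interval continuous_intros) auto
  next
    fix r assume r: "r \<in> {0..t}"
    have "norm (f (a r) - f (b r)) \<le> L * norm (a r - b r)"
      using lipschitz_on_normD[OF lipschitz] by simp
    also have "\<dots> \<le> L * ((L * r)^k / fact k * dist \<phi> \<psi>)"
      using Suc.IH[of r] r Suc.prems lipschitz_on_nonneg[OF lipschitz]
      unfolding a_def b_def by (intro mult_left_mono) auto
    finally show "norm (f (a r) - f (b r)) \<le> L * ((L * r)^k / fact k * dist \<phi> \<psi>)" .
  qed
  also have "\<dots> = (L * t)^Suc k / fact (Suc k) * dist \<phi> \<psi>"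
    using Suc.prems by (intro integral_unique has_integral_power_div_fact) simp
  finally show ?case .
qed

private lemma picard_iterate_contraction:
  assumes "k \<noteq> 0"
  shows "dist (((picard_step f z0 T)^^k) \<phi>) (((picard_step f z0 T)^^k) \<psi>)
      \<le> (L * T)^k / fact k * dist \<phi> \<psi>"
proof (rule dist_bound)
  fix t
  have clamp_in: "clamp 0 T t \<in> {0..T}"
    using T_nonneg clamp_in_interval[of 0 T t] by simp
  obtain j where k: "k = Suc j"
    using assms not0_implies_Suc by blast
  have "apply_bcontfun (((picard_step f z0 T)^^k) \<zeta>) t = apply_bcontfun (((picard_step f z0 T)^^k) \<zeta>) (clamp 0 T t)" for \<zeta>
    using clamp_in by (simp add: k picard_step_apply)
  then have "dist (apply_bcontfun (((picard_step f z0 T)^^k) \<phi>) t) (apply_bcontfun (((picard_step f z0 T)^^k) \<psi>) t)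
      \<le> (L * clamp 0 T t)^k / fact k * dist \<phi> \<psi>"
    using picard_iterate_dist_le[OF clamp_in, of k \<phi> \<psi>] by (simp add: dist_norm)
  also have "\<dots> \<le> (L * T)^k / fact k * dist \<phi> \<psi>"
    using clamp_in lipschitz_on_nonneg[OF lipschitz]
    by (intro mult_right_mono divide_right_mono power_mono mult_left_mono) auto
  finally show "dist (apply_bcontfun (((picard_step f z0 T)^^k) \<phi>) t) (apply_bcontfun (((picard_step f z0 T)^^k) \<psi>) t)
      \<le> (L * T)^k / fact k * dist \<phi> \<psi>" .
qed

private lemma picard_step_fixed_point: "\<exists>\<phi>. picard_step f z0 T \<phi> = \<phi>"
proof -
  obtain k where k: "(L * T)^k / fact k < 1"
    using ex_power_div_fact_less_1 by blast
  then have "k \<noteq> 0"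
    by (cases k) auto
  then have "\<exists>!\<phi>. ((picard_step f z0 T)^^k) \<phi> = \<phi>"
    using k lipschitz_on_nonneg[OF lipschitz] T_nonneg picard_iterate_contraction
    by (intro banach_fix_type[OF _ k]) auto
  then obtain \<phi> where fixed: "((picard_step f z0 T)^^k) \<phi> = \<phi>"
    and unique: "\<And>\<psi>. ((picard_step f z0 T)^^k) \<psi> = \<psi> \<Longrightarrow> \<psi> = \<phi>"
    by blast
  have "((picard_step f z0 T)^^k) (picard_step f z0 T \<phi>) = picard_step f z0 T \<phi>"
    using fixed by (metis funpow_swap1)
  then show ?thesis
    using unique by blast
qed

lemma lipschitz_ode_solution:
  "\<exists>\<phi>. \<phi> 0 = z0 \<and> continuous_on {0..T} \<phi> \<and>
     (\<forall>t\<in>{0..T}. (\<phi> has_vector_derivative f (\<phi> t)) (at t within {0..T}))"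
proof -
  obtain \<Phi> where fixed: "picard_step f z0 T \<Phi> = \<Phi>"
    using picard_step_fixed_point by blast
  define \<phi> where "\<phi> = apply_bcontfun \<Phi>"
  have cont: "continuous_on UNIV \<phi>"
    by (simp add: \<phi>_def)
  have \<phi>_eq: "\<phi> t = z0 + integral {0..t} (\<lambda>r. f (\<phi> r))" if "t \<in> {0..T}" for t
    using picard_step_apply[of \<Phi> t] that by (simp add: fixed \<phi>_def clamp_cancel_cbox)
  have cont_f\<phi>: "continuous_on {0..T} (\<lambda>r. f (\<phi> r))"
    using cont by (rule continuous_on_field_along)
  show ?thesis
  proof (intro exI conjI ballI)
    show "\<phi> 0 = z0"
      using \<phi>_eq[of 0] T_nonneg by simp
    show "continuous_on {0..T} \<phi>"
      using cont by (rule continuous_on_subset) simp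
  next
    fix t assume t: "t \<in> {0..T}"
    have "((\<lambda>u. z0 + integral {0..u} (\<lambda>r. f (\<phi> r))) has_vector_derivative f (\<phi> t)) (at t within {0..T})"
      using has_vector_derivative_add[OF has_vector_derivative_const integral_has_vector_derivative[OF cont_f\<phi> t]]
      by simp
    then show "(\<phi> has_vector_derivative f (\<phi> t)) (at t within {0..T})"
      by (rule has_vector_derivative_transform[OF t \<phi>_eq, rotated])
  qed
qed

end

section \<open>Inverses of uniformly positive definite matrices\<close>

lemma matrix_diff_ldistrib: "(A::'a::ring_1^'n^'m) ** (B - C) = A ** B - A ** C"
  by (simp add: vec_eq_iff matrix_matrix_mult_def sum_subtractf algebra_simps)

lemma matrix_diff_rdistrib: "((B::'a::ring_1^'n^'m) - C) ** A = B ** A - C ** A"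
  by (simp add: vec_eq_iff matrix_matrix_mult_def sum_subtractf algebra_simps)

lemma matrix_mult_triple_entry:
  "((P::'a::comm_semiring_1^'n^'n) ** Q ** R) $ i $ j = (\<Sum>k\<in>UNIV. \<Sum>l\<in>UNIV. P $ i $ k * Q $ k $ l * R $ l $ j)"
  by (simp add: matrix_matrix_mult_def sum_distrib_left sum_distrib_right mult.assoc) (rule sum.swap)

lemma matrix_bilinear_eq_sum:
  "a \<bullet> ((N::real^'n^'n) *v b) = (\<Sum>i\<in>UNIV. \<Sum>j\<in>UNIV. a $ i * b $ j * N $ i $ j)"
  by (simp add: inner_vec_def matrix_vector_mult_def sum_distrib_left mult.assoc)
     (intro sum.cong refl, simp add: ac_simps)

lemma matrix_bilinear_symmetric:
  assumes "transpose (N::real^'n^'n) = N"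
  shows "a \<bullet> (N *v b) = b \<bullet> (N *v a)"
proof -
  have N: "N $ i $ j = N $ j $ i" for i j
    using arg_cong[OF assms, of "\<lambda>M. M $ j $ i"] by (simp add: transpose_def)
  show ?thesis
    unfolding matrix_bilinear_eq_sum by (subst sum.swap) (simp add: N ac_simps)
qed

lemma posdef_matrix_inv:
  fixes A :: "real^'n^'n"
  assumes c: "0 < c" and posdef: "\<And>v. c * (norm v)^2 \<le> v \<bullet> (A *v v)"
  shows "A ** matrix_inv A = mat 1" "matrix_inv A ** A = mat 1"
proof -
  have "inj ((*v) A)"
  proof (rule injI)
    fix v w assume "A *v v = A *v w"
    then have "c * (norm (v - w))^2 \<le> 0"
      using posdef[of "v - w"] by (simp add: matrix_vector_mult_diff_distrib)
    then show "v = w"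
      using c by (simp add: mult_le_0_iff)
  qed
  then have "invertible A"
    using matrix_left_invertible_injective invertible_left_inverse by blast
  then have "A ** matrix_inv A = mat 1 \<and> matrix_inv A ** A = mat 1"
    unfolding invertible_def matrix_inv_def by (rule someI_ex)
  then show "A ** matrix_inv A = mat 1" "matrix_inv A ** A = mat 1"
    by auto
qed

lemma posdef_matrix_inv_entry_bound:
  fixes A :: "real^'n^'n"
  assumes c: "0 < c" and posdef: "\<And>v. c * (norm v)^2 \<le> v \<bullet> (A *v v)"
  shows "\<bar>matrix_inv A $ i $ j\<bar> \<le> 1 / c"
proof -
  define w where "w = matrix_inv A *v axis j 1"
  have "A *v w = axis j 1"
    using posdef_matrix_inv[OF assms] by (simp add: w_def matrix_vector_mul_assoc)
  then have "c * (norm w)^2 \<le> norm w * norm (axis j (1::real))"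
    using posdef[of w] norm_cauchy_schwarz[of w "axis j 1"] by simp
  then have "c * norm w \<le> 1"
    by (cases "norm w = 0") (auto simp: power2_eq_square)
  moreover have "\<bar>matrix_inv A $ i $ j\<bar> \<le> norm w"
    using component_le_norm_cart[of w i]
    by (simp add: w_def matrix_vector_mult_def axis_def if_distrib cong: if_cong)
  ultimately have "c * \<bar>matrix_inv A $ i $ j\<bar> \<le> 1"
    using c by (meson mult_left_mono order_trans less_imp_le)
  then show ?thesis
    using c by (simp add: field_simps)
qed

lemma inverse_diff_eq:
  fixes A B :: "real^'n^'n"
  assumes "A ** NA = mat 1" "NA ** A = mat 1" "B ** NB = mat 1" "NB ** B = mat 1"
  shows "NA - NB = NA ** (B - A) ** NB"
proof -
  have "NA ** (B - A) ** NB = NA ** B ** NB - NA ** A ** NB"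
    by (simp add: matrix_diff_ldistrib matrix_diff_rdistrib)
  also have "\<dots> = NA - NB"
    using assms by (simp add: matrix_mul_assoc[symmetric])
  finally show ?thesis
    by simp
qed

lemma transpose_inverse_of_symmetric:
  fixes A N :: "real^'n^'n"
  assumes "A ** N = mat 1" "N ** A = mat 1" "transpose A = A"
  shows "transpose N = N"
proof -
  have "transpose N ** A = mat 1"
    using arg_cong[OF assms(1), of transpose] assms(3) by (simp add: matrix_transpose_mul)
  then have "transpose N = transpose N ** (A ** N)"
    using assms(1) by simp
  also have "\<dots> = N"
    using \<open>transpose N ** A = mat 1\<close> by (simp add: matrix_mul_assoc)
  finally show ?thesis .
qed

lemma inverse_entry_resolvent:
  fixes A B :: "real^'n^'n"
  assumes "A ** NA = mat 1" "NA ** A = mat 1" "B ** NB = mat 1" "NB ** B = mat 1"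
  shows "NA $ i $ j = NB $ i $ j
    + (\<Sum>k\<in>UNIV. \<Sum>l\<in>UNIV. - (NA $ i $ k * NB $ l $ j) * (A $ k $ l - B $ k $ l))"
proof -
  have "NA $ i $ j - NB $ i $ j = (NA ** (B - A) ** NB) $ i $ j"
    using inverse_diff_eq[OF assms] by (metis vector_minus_component)
  also have "\<dots> = (\<Sum>k\<in>UNIV. \<Sum>l\<in>UNIV. NA $ i $ k * (B $ k $ l - A $ k $ l) * NB $ l $ j)"
    by (simp add: matrix_mult_triple_entry)
  finally show ?thesis
    by (simp add: algebra_simps)
qed

lemma inverse_entry_diff_bound:
  fixes A B :: "real^'n^'n"
  assumes "A ** NA = mat 1" "NA ** A = mat 1" "B ** NB = mat 1" "NB ** B = mat 1"
    and bound_A: "\<And>i j. \<bar>NA $ i $ j\<bar> \<le> K" and bound_B: "\<And>i j. \<bar>NB $ i $ j\<bar> \<le> K"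
  shows "\<bar>NA $ i $ j - NB $ i $ j\<bar> \<le> K * K * (\<Sum>k\<in>UNIV. \<Sum>l\<in>UNIV. \<bar>A $ k $ l - B $ k $ l\<bar>)"
proof -
  have "\<bar>NA $ i $ j - NB $ i $ j\<bar>
      \<le> (\<Sum>k\<in>UNIV. \<Sum>l\<in>UNIV. \<bar>- (NA $ i $ k * NB $ l $ j) * (A $ k $ l - B $ k $ l)\<bar>)"
    by (subst inverse_entry_resolvent[OF assms(1-4)])
       (simp only: add_diff_cancel_left' order_trans[OF sum_abs sum_mono[OF sum_abs]])
  also have "\<dots> \<le> (\<Sum>k\<in>UNIV. \<Sum>l\<in>UNIV. K * K * \<bar>A $ k $ l - B $ k $ l\<bar>)"
    unfolding abs_mult abs_minus_cancel using order_trans[OF abs_ge_zero bound_A]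
    by (intro sum_mono mult_right_mono mult_mono bound_A bound_B) auto
  finally show ?thesis
    by (simp add: sum_distrib_left)
qed

lemma continuous_inverse_entry:
  fixes A :: "'b::real_normed_vector \<Rightarrow> real^'n^'n"
  assumes c: "0 < c" and posdef: "\<And>w v. w \<in> S \<Longrightarrow> c * (norm v)^2 \<le> v \<bullet> (A w *v v)"
    and z: "z \<in> S" and cont: "\<And>k l. continuous (at z within S) (\<lambda>w. A w $ k $ l)"
  shows "continuous (at z within S) (\<lambda>w. matrix_inv (A w) $ i $ j)"
proof -
  define R where "R = (\<lambda>w. 1/c * (1/c) * (\<Sum>k\<in>UNIV. \<Sum>l\<in>UNIV. \<bar>A w $ k $ l - A z $ k $ l\<bar>))"
  have entry: "((\<lambda>w. \<bar>A w $ k $ l - A z $ k $ l\<bar>) \<longlongrightarrow> \<bar>A z $ k $ l - A z $ k $ l\<bar>) (at z within S)" for k l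
    using cont[of k l] unfolding continuous_within by (intro tendsto_rabs tendsto_diff tendsto_const)
  have "((\<lambda>w. \<Sum>k\<in>UNIV. \<Sum>l\<in>UNIV. \<bar>A w $ k $ l - A z $ k $ l\<bar>)
      \<longlongrightarrow> (\<Sum>k\<in>UNIV. \<Sum>l\<in>UNIV. \<bar>A z $ k $ l - A z $ k $ l\<bar>)) (at z within S)"
    by (intro tendsto_sum entry)
  then have "(R \<longlongrightarrow> 1/c * (1/c) * (\<Sum>k\<in>UNIV. \<Sum>l\<in>UNIV. \<bar>A z $ k $ l - A z $ k $ l\<bar>)) (at z within S)"
    unfolding R_def by (rule tendsto_mult_left)
  then have R: "(R \<longlongrightarrow> 0) (at z within S)"
    by simp
  have "\<forall>\<^sub>F w in at z within S. norm (matrix_inv (A w) $ i $ j - matrix_inv (A z) $ i $ j) \<le> R w"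
    unfolding eventually_at_filter
  proof (intro always_eventually allI impI)
    fix w assume "w \<noteq> z" "w \<in> S"
    then show "norm (matrix_inv (A w) $ i $ j - matrix_inv (A z) $ i $ j) \<le> R w"
      unfolding R_def real_norm_def using z posdef_matrix_inv[OF c posdef] posdef_matrix_inv_entry_bound[OF c posdef]
      by (intro inverse_entry_diff_bound) auto
  qed
  then have "((\<lambda>w. matrix_inv (A w) $ i $ j - matrix_inv (A z) $ i $ j) \<longlongrightarrow> 0) (at z within S)"
    by (rule Lim_null_comparison[OF _ R])
  then show ?thesis
    unfolding continuous_within by (simp add: LIM_zero_iff)
qed

lemma has_derivative_mult_vanishing_zero:
  fixes g \<phi> :: "'b::real_normed_vector \<Rightarrow> real"
  assumes zero: "\<phi> z = 0" and deriv: "(\<phi> has_derivative \<phi>') (at z within S)"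
    and g: "(g \<longlongrightarrow> 0) (at z within S)"
  shows "((\<lambda>w. g w * \<phi> w) has_derivative (\<lambda>d. 0)) (at z within S)"
  unfolding has_derivative_within
proof (intro conjI bounded_linear_zero)
  obtain K where K: "\<And>d. norm (\<phi>' d) \<le> norm d * K" "0 < K"
    using bounded_linear.pos_bounded[OF has_derivative_bounded_linear[OF deriv]] by blast
  define Q where "Q = (\<lambda>w. (1 / norm (w - z)) *\<^sub>R (\<phi> w - (\<phi> z + \<phi>' (w - z))))"
  have Q: "(Q \<longlongrightarrow> 0) (at z within S)"
    using deriv unfolding has_derivative_within Q_def by blast
  define R where "R = (\<lambda>w. \<bar>g w\<bar> * (norm (Q w) + K))"
  have R: "(R \<longlongrightarrow> 0) (at z within S)"
    using tendsto_mult[OF tendsto_rabs[OF g] tendsto_add[OF tendsto_norm[OF Q] tendsto_const]]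
    unfolding R_def by simp
  show "((\<lambda>w. (1 / norm (w - z)) *\<^sub>R (g w * \<phi> w - (g z * \<phi> z + 0))) \<longlongrightarrow> 0) (at z within S)"
  proof (intro Lim_null_comparison[OF _ R] always_eventually allI)
    fix w
    have "\<bar>\<phi> w\<bar> \<le> norm (w - z) * (norm (Q w) + K)"
    proof (cases "w = z")
      case False
      have "\<bar>\<phi> w\<bar> \<le> \<bar>\<phi> w - \<phi>' (w - z)\<bar> + norm (w - z) * K"
        using K(1)[of "w - z"] by simp
      also have "\<bar>\<phi> w - \<phi>' (w - z)\<bar> = norm (w - z) * norm (Q w)"
        using False by (simp add: Q_def zero)
      finally show ?thesis
        by (simp add: algebra_simps)
    qed (simp add: zero)
    then have "\<bar>g w\<bar> * \<bar>\<phi> w\<bar> \<le> norm (w - z) * R w"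
      unfolding R_def by (metis abs_ge_zero mult.left_commute mult_left_mono)
    moreover have "0 \<le> R w"
      using K(2) by (simp add: R_def)
    ultimately show "norm ((1 / norm (w - z)) *\<^sub>R (g w * \<phi> w - (g z * \<phi> z + 0))) \<le> R w"
      by (cases "w = z") (simp_all add: zero abs_mult pos_divide_le_eq mult.commute)
  qed
qed

lemma has_derivative_mult_vanishing:
  fixes g \<phi> :: "'b::real_normed_vector \<Rightarrow> real"
  assumes zero: "\<phi> z = 0" and deriv: "(\<phi> has_derivative \<phi>') (at z within S)"
    and cont: "continuous (at z within S) g"
  shows "((\<lambda>w. g w * \<phi> w) has_derivative (\<lambda>d. g z * \<phi>' d)) (at z within S)"
proof -
  have "((\<lambda>w. g w - g z) \<longlongrightarrow> 0) (at z within S)"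
    using cont unfolding continuous_within by (simp add: LIM_zero)
  then have "((\<lambda>w. g z * \<phi> w + (g w - g z) * \<phi> w) has_derivative (\<lambda>d. g z * \<phi>' d + 0)) (at z within S)"
    by (rule has_derivative_add[OF has_derivative_mult_right[OF deriv] has_derivative_mult_vanishing_zero[OF zero deriv]])
  then show ?thesis
    by (simp add: algebra_simps)
qed

lemma has_derivative_inverse_entry:
  fixes A :: "'b::real_normed_vector \<Rightarrow> real^'n^'n"
  assumes c: "0 < c" and posdef: "\<And>w v. w \<in> S \<Longrightarrow> c * (norm v)^2 \<le> v \<bullet> (A w *v v)"
    and z: "z \<in> S" and deriv: "\<And>k l. ((\<lambda>w. A w $ k $ l) has_derivative A' k l) (at z within S)"
  shows "((\<lambda>w. matrix_inv (A w) $ i $ j) has_derivative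
          (\<lambda>d. - (\<Sum>k\<in>UNIV. \<Sum>l\<in>UNIV. matrix_inv (A z) $ i $ k * A' k l d * matrix_inv (A z) $ l $ j)))
         (at z within S)"
proof -
  define N where "N w = matrix_inv (A w)" for w
  have inverse: "A w ** N w = mat 1" "N w ** A w = mat 1" if "w \<in> S" for w
    using posdef_matrix_inv[OF c posdef[OF that]] unfolding N_def by auto
  have cont: "continuous (at z within S) (\<lambda>w. - (N w $ i $ k * N z $ l $ j))" for k l
    unfolding N_def
    by (intro continuous_minus continuous_mult_right
        continuous_inverse_entry[OF c posdef z has_derivative_continuous[OF deriv]])
  have resolvent: "N w $ i $ j = N z $ i $ j
      + (\<Sum>k\<in>UNIV. \<Sum>l\<in>UNIV. - (N w $ i $ k * N z $ l $ j) * (A w $ k $ l - A z $ k $ l))"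
    if "w \<in> S" for w
    using inverse_entry_resolvent[OF inverse[OF that] inverse[OF z]] .
  txt \<open>\<open>N\<close> is only known to be continuous here, which suffices because the factors
    \<open>A w - A z\<close> vanish at \<open>z\<close>.\<close>
  have expansion: "((\<lambda>w. N z $ i $ j + (\<Sum>k\<in>UNIV. \<Sum>l\<in>UNIV. (- (N w $ i $ k * N z $ l $ j)) * (A w $ k $ l - A z $ k $ l)))
      has_derivative (\<lambda>d. 0 + (\<Sum>k\<in>UNIV. \<Sum>l\<in>UNIV. (- (N z $ i $ k * N z $ l $ j)) * A' k l d))) (at z within S)"
  proof (intro has_derivative_add has_derivative_const has_derivative_sum)
    fix k l
    have "((\<lambda>w. A w $ k $ l - A z $ k $ l) has_derivative A' k l) (at z within S)"
      using has_derivative_diff[OF deriv[of k l] has_derivative_const[of "A z $ k $ l"]] by simp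
    then show "((\<lambda>w. (- (N w $ i $ k * N z $ l $ j)) * (A w $ k $ l - A z $ k $ l)) has_derivative
        (\<lambda>d. (- (N z $ i $ k * N z $ l $ j)) * A' k l d)) (at z within S)"
      using has_derivative_mult_vanishing[of "\<lambda>w. A w $ k $ l - A z $ k $ l" z, OF _ _ cont] by simp
  qed
  have "((\<lambda>w. N w $ i $ j) has_derivative
      (\<lambda>d. 0 + (\<Sum>k\<in>UNIV. \<Sum>l\<in>UNIV. (- (N z $ i $ k * N z $ l $ j)) * A' k l d))) (at z within S)"
    by (rule has_derivative_transform[OF z _ expansion]) (rule resolvent)
  moreover have "(\<lambda>d. 0 + (\<Sum>k\<in>UNIV. \<Sum>l\<in>UNIV. (- (N z $ i $ k * N z $ l $ j)) * A' k l d))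
      = (\<lambda>d. - (\<Sum>k\<in>UNIV. \<Sum>l\<in>UNIV. N z $ i $ k * A' k l d * N z $ l $ j))"
    by (simp add: fun_eq_iff sum_negf[symmetric] algebra_simps)
  ultimately show ?thesis
    unfolding N_def by simp
qed

section \<open>Bounded Lipschitz functions\<close>

definition bounded_lipschitz_on :: "'a::metric_space set \<Rightarrow> ('a \<Rightarrow> real) \<Rightarrow> bool" where
  "bounded_lipschitz_on S f \<longleftrightarrow> (\<exists>B. \<forall>z\<in>S. \<bar>f z\<bar> \<le> B) \<and> (\<exists>L. L-lipschitz_on S f)"

lemma bounded_lipschitz_onI:
  "(\<And>z. z \<in> S \<Longrightarrow> \<bar>f z\<bar> \<le> B) \<Longrightarrow> L-lipschitz_on S f \<Longrightarrow> bounded_lipschitz_on S f"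
  unfolding bounded_lipschitz_on_def by blast

lemma bounded_lipschitz_onE:
  assumes "bounded_lipschitz_on S f"
  obtains B L where "\<And>z. z \<in> S \<Longrightarrow> \<bar>f z\<bar> \<le> B" "L-lipschitz_on S f"
  using assms unfolding bounded_lipschitz_on_def by blast

lemma bounded_lipschitz_on_imp_lipschitz: "bounded_lipschitz_on S f \<Longrightarrow> \<exists>L. L-lipschitz_on S f"
  unfolding bounded_lipschitz_on_def by blast

lemma bounded_lipschitz_on_const: "bounded_lipschitz_on S (\<lambda>z. a)"
  by (rule bounded_lipschitz_onI[of _ _ "\<bar>a\<bar>"]) (auto intro: lipschitz_on_constant)

lemma bounded_lipschitz_on_add:
  assumes "bounded_lipschitz_on S f" "bounded_lipschitz_on S g"
  shows "bounded_lipschitz_on S (\<lambda>z. f z + g z)"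
proof -
  obtain B L B' L' where "\<And>z. z \<in> S \<Longrightarrow> \<bar>f z\<bar> \<le> B" "L-lipschitz_on S f"
    "\<And>z. z \<in> S \<Longrightarrow> \<bar>g z\<bar> \<le> B'" "L'-lipschitz_on S g"
    using assms by (metis bounded_lipschitz_onE)
  then show ?thesis
    by (intro bounded_lipschitz_onI[of _ _ "B + B'" "L + L'"] lipschitz_on_add)
       (auto intro: order_trans[OF abs_triangle_ineq add_mono])
qed

lemma bounded_lipschitz_on_minus:
  "bounded_lipschitz_on S f \<Longrightarrow> bounded_lipschitz_on S (\<lambda>z. - f z)"
  unfolding bounded_lipschitz_on_def by simp

lemma bounded_lipschitz_on_mult:
  assumes "bounded_lipschitz_on S f" "bounded_lipschitz_on S g"
  shows "bounded_lipschitz_on S (\<lambda>z. f z * g z)"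
proof -
  obtain B L B' L' where f: "\<And>z. z \<in> S \<Longrightarrow> \<bar>f z\<bar> \<le> B" "L-lipschitz_on S f"
    and g: "\<And>z. z \<in> S \<Longrightarrow> \<bar>g z\<bar> \<le> B'" "L'-lipschitz_on S g"
    using assms by (metis bounded_lipschitz_onE)
  show ?thesis
  proof (rule bounded_lipschitz_onI)
    fix z assume "z \<in> S"
    then show "\<bar>f z * g z\<bar> \<le> \<bar>B\<bar> * \<bar>B'\<bar>"
      using f(1) g(1) unfolding abs_mult by (intro mult_mono) force+
  next
    show "(\<bar>B\<bar> * L' + \<bar>B'\<bar> * L)-lipschitz_on S (\<lambda>z. f z * g z)"
    proof (rule lipschitz_onI)
      fix z z' assume z: "z \<in> S" "z' \<in> S"
      have "f z * g z - f z' * g z' = f z * (g z - g z') + g z' * (f z - f z')"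
        by (simp add: algebra_simps)
      then have "\<bar>f z * g z - f z' * g z'\<bar> \<le> \<bar>f z\<bar> * \<bar>g z - g z'\<bar> + \<bar>g z'\<bar> * \<bar>f z - f z'\<bar>"
        using abs_triangle_ineq[of "f z * (g z - g z')" "g z' * (f z - f z')"] by (simp add: abs_mult)
      also have "\<dots> \<le> \<bar>B\<bar> * (L' * dist z z') + \<bar>B'\<bar> * (L * dist z z')"
        using z f g lipschitz_onD[OF f(2) z] lipschitz_onD[OF g(2) z]
        by (intro add_mono mult_mono) (auto simp: dist_real_def intro: order_trans[OF _ abs_ge_self])
      finally show "dist (f z * g z) (f z' * g z') \<le> (\<bar>B\<bar> * L' + \<bar>B'\<bar> * L) * dist z z'"
        by (simp add: dist_real_def algebra_simps)
    qed (use lipschitz_on_nonneg[OF f(2)] lipschitz_on_nonneg[OF g(2)] in simp)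
  qed
qed

lemma bounded_lipschitz_on_sum:
  "(\<And>i. i \<in> I \<Longrightarrow> bounded_lipschitz_on S (f i)) \<Longrightarrow> bounded_lipschitz_on S (\<lambda>z. \<Sum>i\<in>I. f i z)"
  by (induction I rule: infinite_finite_induct)
     (auto intro: bounded_lipschitz_on_const bounded_lipschitz_on_add)

lemma bounded_lipschitz_on_compose:
  assumes f: "bounded_lipschitz_on T f" and g: "L-lipschitz_on S g" "g ` S \<subseteq> T"
  shows "bounded_lipschitz_on S (\<lambda>z. f (g z))"
proof -
  obtain B K where "\<And>z. z \<in> T \<Longrightarrow> \<bar>f z\<bar> \<le> B" "K-lipschitz_on T f"
    using f unfolding bounded_lipschitz_on_def by blast
  then show ?thesis
    using g by (intro bounded_lipschitz_onI[of _ _ B "K * L"] lipschitz_on_compose2[of L S g K f])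
      (auto intro: lipschitz_on_subset)
qed

lemma bounded_lipschitz_on_clamp:
  assumes g: "L-lipschitz_on S g" and "a \<le> b"
  shows "bounded_lipschitz_on S (\<lambda>z. clamp a b (g z :: real))"
proof (rule bounded_lipschitz_onI)
  fix z
  have "clamp a b (g z) \<in> {a..b}"
    using clamp_in_interval[of a b "g z"] \<open>a \<le> b\<close> by simp
  then show "\<bar>clamp a b (g z)\<bar> \<le> \<bar>a\<bar> + \<bar>b\<bar>"
    by auto
next
  show "L-lipschitz_on S (\<lambda>z. clamp a b (g z))"
    using lipschitz_on_nonneg[OF g] lipschitz_onD[OF g]
    by (intro lipschitz_onI) (auto intro: order_trans[OF dist_clamps_le_dist_args])
qed

lemma lipschitz_on_vec_lambda:
  assumes "\<And>i. \<exists>L. L-lipschitz_on S (f i)"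
  shows "\<exists>L. L-lipschitz_on S (\<lambda>z. \<chi> i. (f i z :: real))"
proof -
  obtain L where L: "\<And>i. (L i)-lipschitz_on S (f i)"
    using assms by metis
  have "(\<Sum>i\<in>UNIV. L i)-lipschitz_on S (\<lambda>z. \<chi> i. f i z)"
  proof (rule lipschitz_onI)
    fix z z' assume z: "z \<in> S" "z' \<in> S"
    have "dist (\<chi> i. f i z) (\<chi> i. f i z') \<le> (\<Sum>i\<in>UNIV. \<bar>f i z - f i z'\<bar>)"
      using norm_le_l1_cart[of "(\<chi> i. f i z) - (\<chi> i. f i z')"] by (simp add: dist_norm)
    also have "\<dots> \<le> (\<Sum>i\<in>UNIV. L i * dist z z')"
      using lipschitz_onD[OF L z] by (intro sum_mono) (simp add: dist_real_def)
    finally show "dist (\<chi> i. f i z) (\<chi> i. f i z') \<le> (\<Sum>i\<in>UNIV. L i) * dist z z'"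
      by (simp add: sum_distrib_right)
  qed (simp add: sum_nonneg lipschitz_on_nonneg[OF L])
  then show ?thesis
    by blast
qed

lemma lipschitz_on_fst: "1-lipschitz_on S fst"
  by (rule lipschitz_onI) (simp_all add: dist_fst_le)

lemma lipschitz_on_snd: "1-lipschitz_on S snd"
  by (rule lipschitz_onI) (simp_all add: dist_snd_le)

lemma has_vector_derivative_fst:
  "(f has_vector_derivative D) F \<Longrightarrow> ((\<lambda>t. fst (f t)) has_vector_derivative fst D) F"
  unfolding has_vector_derivative_def by (drule has_derivative_fst) simp

lemma has_vector_derivative_snd:
  "(f has_vector_derivative D) F \<Longrightarrow> ((\<lambda>t. snd (f t)) has_vector_derivative snd D) F"
  unfolding has_vector_derivative_def by (drule has_derivative_snd) simp

lemma mvt_within_interval: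
  fixes f :: "real \<Rightarrow> real"
  assumes "a \<le> b" and "\<And>x. x \<in> {a..b} \<Longrightarrow> (f has_real_derivative f' x) (at x within {a..b})"
  shows "\<exists>\<xi>\<in>{a..b}. f b - f a = (b - a) * f' \<xi>"
proof -
  have "\<exists>\<xi>\<in>{a..b}. f b - f a = (\<lambda>d. d * f' \<xi>) (b - a)"
    using assms by (intro mvt_very_simple) (auto simp: has_field_derivative_def mult_commute_abs)
  then show ?thesis
    by auto
qed

lemma norm_diff_le_derivative_bound:
  fixes f :: "real \<Rightarrow> 'a::real_normed_vector"
  assumes t: "t \<in> {0..T}" and deriv: "\<And>x. x \<in> {0..T} \<Longrightarrow> (f has_vector_derivative f' x) (at x within {0..T})"
    and bound: "\<And>x. x \<in> {0..T} \<Longrightarrow> norm (f' x) \<le> M"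
  shows "norm (f t - f 0) \<le> M * t"
proof -
  have "norm (f t - f 0) \<le> M * norm (t - 0)"
  proof (rule differentiable_bound[of "{0..t}" f "\<lambda>x d. d *\<^sub>R f' x"])
    fix x assume x: "x \<in> {0..t}"
    then have "x \<in> {0..T}"
      using t by auto
    then show "(f has_derivative (\<lambda>d. d *\<^sub>R f' x)) (at x within {0..t})"
      using has_vector_derivative_within_subset[OF deriv, of x "{0..t}"] t
      unfolding has_vector_derivative_def by auto
    show "onorm (\<lambda>d. d *\<^sub>R f' x) \<le> M"
      using bound[OF \<open>x \<in> {0..T}\<close>] by (intro onorm_le) (simp add: mult.commute[of M] mult_left_mono)
  qed (use t in auto)
  then show ?thesis
    using t by simp
qed

text \<open>Proof: \<open>e\<^sup>-\<^sup>a\<^sup>t (m + b)\<close> is nonincreasing.\<close>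

lemma gronwall_affine:
  fixes m m' :: "real \<Rightarrow> real"
  assumes t: "0 \<le> t" and deriv: "\<And>x. x \<in> {0..t} \<Longrightarrow> (m has_real_derivative m' x) (at x within {0..t})"
    and growth: "\<And>x. x \<in> {0..t} \<Longrightarrow> m' x \<le> a * (m x + b)"
  shows "m t + b \<le> (m 0 + b) * exp (a * t)"
proof -
  define \<psi> where "\<psi> x = exp (- a * x) * (m x + b)" for x
  define D where "D x = exp (- a * x) * (m' x - a * (m x + b))" for x
  have "(\<psi> has_real_derivative D x) (at x within {0..t})" if "x \<in> {0..t}" for x
  proof -
    have "((\<lambda>x. exp (- a * x)) has_real_derivative exp (- a * x) * (- a)) (at x within {0..t})"
      using DERIV_chain'[OF DERIV_cmult[OF DERIV_ident, of "- a"] DERIV_exp] by simp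
    from DERIV_mult[OF this DERIV_add[OF deriv[OF that] DERIV_const[of b]]]
    show ?thesis
      unfolding \<psi>_def[abs_def] D_def by (rule DERIV_cong) (simp add: algebra_simps)
  qed
  from mvt_within_interval[OF t this] obtain \<xi> where \<xi>: "\<xi> \<in> {0..t}" "\<psi> t - \<psi> 0 = t * D \<xi>"
    by auto
  have "D \<xi> \<le> 0"
    using growth[OF \<xi>(1)] by (simp add: D_def mult_nonneg_nonpos)
  then have "\<psi> t \<le> \<psi> 0"
    using \<xi>(2) mult_nonneg_nonpos[OF t] by fastforce
  then have "exp (- a * t) * (m t + b) \<le> m 0 + b"
    by (simp add: \<psi>_def)
  then have "m t + b \<le> (m 0 + b) / exp (- a * t)"
    by (simp add: pos_le_divide_eq mult.commute)
  then show ?thesis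
    by (simp add: exp_minus divide_inverse)
qed

lemma clamp_real: "(a::real) \<le> b \<Longrightarrow> clamp a b x = max a (min b x)"
  unfolding clamp_def Basis_real_def by auto

lemma abs_clamp_symmetric: "0 \<le> b \<Longrightarrow> \<bar>clamp (- b) b (x::real)\<bar> \<le> b"
  by (simp add: clamp_real)

lemma power2_clamp_symmetric: "0 \<le> b \<Longrightarrow> (clamp (- b) b (x::real))^2 \<le> b^2"
  using power_mono[OF abs_clamp_symmetric, of b x 2] by simp

lemma pi_plus_half_le_4: "pi + 1/2 \<le> 4"
  using pi_approx(2) by simp

lemma uniform_bound_finite:
  fixes f :: "'i::finite \<Rightarrow> 'a \<Rightarrow> real"
  assumes "\<And>i. \<exists>B. \<forall>w. \<bar>f i w\<bar> \<le> B"
  shows "\<exists>B. \<forall>i w. \<bar>f i w\<bar> \<le> B"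
proof -
  obtain B where B: "\<And>i w. \<bar>f i w\<bar> \<le> B i"
    using assms by metis
  have "\<bar>f i w\<bar> \<le> Max (range B)" for i w
    using order_trans[OF B[of i w] Max_ge[of "range B" "B i"]] by simp
  then show ?thesis
    by blast
qed

lemma norm_vec_lambda_le:
  fixes f :: "'n::finite \<Rightarrow> real" and M :: real
  assumes "\<And>i. \<bar>f i\<bar> \<le> M"
  shows "norm (\<chi> i. f i) \<le> CARD('n) * M"
proof -
  have "norm (\<chi> i. f i) \<le> (\<Sum>i\<in>UNIV. \<bar>f i\<bar>)"
    using norm_le_l1_cart[of "\<chi> i. f i"] by simp
  also have "\<dots> \<le> CARD('n) * M"
    using sum_mono[of UNIV "\<lambda>i. \<bar>f i\<bar>" "\<lambda>i. M", OF assms] by simp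
  finally show ?thesis .
qed

lemma abs_le_tenth_of_square: "(a::real) * a \<le> 1/100 \<Longrightarrow> \<bar>a\<bar> \<le> 1/10"
proof -
  assume "a * a \<le> 1/100"
  then have "a^2 \<le> (1/10)^2"
    by (simp add: power2_eq_square)
  then have "\<bar>a\<bar> \<le> \<bar>1/10\<bar>"
    by (simp only: abs_le_square_iff)
  then show ?thesis
    by simp
qed

lemma cos_ge_7_8: assumes "0 \<le> x" "x \<le> 1/2" shows "7/8 \<le> cos (x::real)"
proof -
  have "\<bar>sin (x/2)\<bar> \<le> \<bar>1/4\<bar>"
    using abs_sin_x_le_abs_x[of "x/2"] assms by simp
  then have "sin (x/2)^2 \<le> (1/4)^2"
    by (simp only: abs_le_square_iff)
  then show ?thesis
    using cos_double_sin[of "x/2"] by (simp add: power2_eq_square)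
qed

lemma sin_half_ge_1_4: "1/4 \<le> sin (1/2::real)"
proof -
  have "\<bar>sin (1/2::real) - (\<Sum>m<3. sin_coeff m * (1/2) ^ m)\<bar> \<le> inverse (fact 3) * \<bar>1/2\<bar> ^ 3"
    by (rule Maclaurin_sin_bound)
  moreover have "(\<Sum>m<3. sin_coeff m * (1/2::real) ^ m) = 1/2"
    by (simp add: eval_nat_numeral sin_coeff_def)
  moreover have "inverse (fact 3) * \<bar>1/2::real\<bar> ^ 3 = 1/48"
    by (simp add: eval_nat_numeral)
  ultimately show ?thesis
    by linarith
qed

lemma sin_ge_1_4: assumes "1/2 \<le> t" "t \<le> pi - 1/2" shows "1/4 \<le> sin t"
proof (cases "t \<le> pi/2")
  case True
  then have "sin (1/2) \<le> sin t"
    using assms pi_gt3 by (subst sin_mono_le_eq) auto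
  then show ?thesis
    using sin_half_ge_1_4 by linarith
next
  case False
  then have "sin (1/2) \<le> sin (pi - t)"
    using assms pi_gt3 by (subst sin_mono_le_eq) auto
  then show ?thesis
    using sin_half_ge_1_4 by simp
qed

lemma abs_mult_plus_le_squares:
  fixes a b \<epsilon> :: real
  assumes "0 \<le> \<epsilon>" "\<epsilon> \<le> 1/2"
  shows "4 * (\<bar>a\<bar> * \<bar>b\<bar>) + 4 * (\<epsilon> * \<bar>b\<bar>) \<le> 3 * (a^2 + b^2 + \<epsilon>)"
proof -
  have "4 * (\<bar>a\<bar> * \<bar>b\<bar>) \<le> 2 * a^2 + 2 * b^2"
    using zero_le_square[of "\<bar>a\<bar> - \<bar>b\<bar>"] by (simp add: algebra_simps power2_eq_square abs_mult_self_eq)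
  moreover have "4 * (\<epsilon> * \<bar>b\<bar>) \<le> 2 * \<epsilon> + 2 * (\<epsilon> * b^2)"
    using mult_left_mono[OF zero_le_square[of "\<bar>b\<bar> - 1"] assms(1)]
    by (simp add: algebra_simps power2_eq_square abs_mult_self_eq)
  moreover have "2 * (\<epsilon> * b^2) \<le> b^2"
    using mult_right_mono[OF assms(2), of "b^2"] by simp
  ultimately show ?thesis
    using assms(1) zero_le_power2[of a] by argo
qed

text \<open>The derivative of \<open>(u - sin)\<^sup>2 + (v - cos)\<^sup>2\<close> along \<open>u' = v\<close>,
  \<open>v' = - M q\<close>, with \<open>a = u - sin\<close>, \<open>b = v - cos\<close>, \<open>M\<close> the clamped \<open>u\<close> and \<open>q \<approx> 1\<close>.\<close>

lemma comparison_derivative_bound: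
  fixes a b M S q \<epsilon> :: real
  assumes "\<bar>M - S\<bar> \<le> \<bar>a\<bar>" "\<bar>M\<bar> \<le> 2" "\<bar>q - 1\<bar> \<le> \<epsilon>" "0 \<le> \<epsilon>" "\<epsilon> \<le> 1/2"
  shows "2 * a * b + 2 * b * (- M * q + S) \<le> 3 * (a^2 + b^2 + \<epsilon>)"
proof -
  have "2 * a * b + 2 * b * (- M * q + S) = 2 * a * b + 2 * b * (- (M - S)) + 2 * b * (- (M * (q - 1)))"
    by (simp add: algebra_simps)
  also have "\<dots> \<le> 2 * (\<bar>a\<bar> * \<bar>b\<bar>) + 2 * (\<bar>a\<bar> * \<bar>b\<bar>) + 4 * (\<epsilon> * \<bar>b\<bar>)"
  proof (intro add_mono)
    show "2 * a * b \<le> 2 * (\<bar>a\<bar> * \<bar>b\<bar>)"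
      by (simp add: abs_mult[symmetric])
    have "2 * b * (- (M - S)) \<le> 2 * (\<bar>b\<bar> * \<bar>M - S\<bar>)"
      using abs_ge_self[of "2 * b * (- (M - S))"] by (simp add: abs_mult abs_minus_commute)
    also have "\<dots> \<le> 2 * (\<bar>a\<bar> * \<bar>b\<bar>)"
      using mult_left_mono[OF assms(1), of "\<bar>b\<bar>"] by (simp add: mult.commute)
    finally show "2 * b * (- (M - S)) \<le> 2 * (\<bar>a\<bar> * \<bar>b\<bar>)" .
    have "2 * b * (- (M * (q - 1))) \<le> 2 * (\<bar>b\<bar> * (\<bar>M\<bar> * \<bar>q - 1\<bar>))"
      using abs_ge_self[of "2 * b * (- (M * (q - 1)))"] by (simp add: abs_mult)
    also have "\<dots> \<le> 2 * (\<bar>b\<bar> * (2 * \<epsilon>))"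
      using assms by (intro mult_left_mono mult_mono) auto
    finally show "2 * b * (- (M * (q - 1))) \<le> 4 * (\<epsilon> * \<bar>b\<bar>)"
      by (simp add: ac_simps)
  qed
  also have "\<dots> \<le> 3 * (a^2 + b^2 + \<epsilon>)"
    using abs_mult_plus_le_squares[OF assms(4,5), of a b] by simp
  finally show ?thesis .
qed

section \<open>The collar\<close>

text \<open>An unpacked \<^const>\<open>gas_giant_family\<close>: \<open>Dh i j\<close> is the family of iterated derivatives
  of \<open>h\<^sub>i\<^sub>j\<close> from \<^const>\<open>smooth_bdd_on\<close>; only those of order at most two are used.\<close>

locale gas_giant_collar =
  fixes h :: "real \<Rightarrow> real^'n \<Rightarrow> real^'n^'n" and x0 c :: real
    and Dh :: "'n \<Rightarrow> 'n \<Rightarrow> (real \<times> (real^'n)) list \<Rightarrow> real \<times> (real^'n) \<Rightarrow> real"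
  assumes x0_pos: "0 < x0" and c_pos: "0 < c"
    and symmetric: "\<And>x y. x \<in> {0..x0} \<Longrightarrow> transpose (h x y) = h x y"
    and posdef: "\<And>x y v. x \<in> {0..x0} \<Longrightarrow> c * (norm v)^2 \<le> v \<bullet> (h x y *v v)"
    and Dh_Nil: "\<And>i j x y. x \<in> {0..x0} \<Longrightarrow> Dh i j [] (x, y) = h x y $ i $ j"
    and Dh_deriv: "\<And>i j vs z. z \<in> {0..x0} \<times> UNIV \<Longrightarrow>
      (Dh i j vs has_derivative (\<lambda>w. Dh i j (w # vs) z)) (at z within {0..x0} \<times> UNIV)"
    and Dh_bound: "\<And>i j vs. \<exists>B. \<forall>z\<in>{0..x0} \<times> UNIV. \<bar>Dh i j vs z\<bar> \<le> B * prod_list (map norm vs)"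
begin

abbreviation collar :: "(real \<times> (real^'n)) set" where
  "collar \<equiv> {0..x0} \<times> UNIV"

lemma Dh_linear: "z \<in> collar \<Longrightarrow> linear (\<lambda>w. Dh i j (w # vs) z)"
  using Dh_deriv[of z i j vs] by (simp add: has_derivative_linear)

lemma Dh_derivative_bound: "\<exists>M. \<forall>z\<in>collar. \<forall>w. \<bar>Dh i j (w # vs) z\<bar> \<le> M * norm w"
proof -
  have "\<forall>b. \<exists>B. \<forall>z\<in>collar. \<bar>Dh i j (b # vs) z\<bar> \<le> B * prod_list (map norm (b # vs))"
    using Dh_bound by blast
  then obtain B where B: "\<And>b z. z \<in> collar \<Longrightarrow> \<bar>Dh i j (b # vs) z\<bar> \<le> B b * prod_list (map norm (b # vs))"
    by metis
  define M where "M = (\<Sum>b\<in>Basis. \<bar>B b * prod_list (map norm (b # vs))\<bar>)"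
  have "\<bar>Dh i j (w # vs) z\<bar> \<le> M * norm w" if z: "z \<in> collar" for z w
  proof -
    have "Dh i j (w # vs) z = (\<lambda>w. Dh i j (w # vs) z) w \<bullet> 1"
      by simp
    also have "\<dots> = (\<Sum>b\<in>Basis. (w \<bullet> b) * ((\<lambda>w. Dh i j (w # vs) z) b \<bullet> 1))"
      by (rule Linear_Algebra.linear_componentwise[OF Dh_linear[OF z]])
    also have "\<bar>\<dots>\<bar> \<le> (\<Sum>b\<in>Basis. norm w * \<bar>B b * prod_list (map norm (b # vs))\<bar>)"
      unfolding inner_real_def mult_1_right
    proof (rule order_trans[OF sum_abs sum_mono])
      fix b :: "real \<times> (real^'n)" assume b: "b \<in> Basis"
      have "\<bar>Dh i j (b # vs) z\<bar> \<le> \<bar>B b * prod_list (map norm (b # vs))\<bar>"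
        using B[OF z, of b] by simp
      with b show "\<bar>w \<bullet> b * Dh i j (b # vs) z\<bar> \<le> norm w * \<bar>B b * prod_list (map norm (b # vs))\<bar>"
        unfolding abs_mult by (intro mult_mono) (auto simp: Basis_le_norm)
    qed
    finally show ?thesis
      by (simp add: M_def sum_distrib_left mult.commute)
  qed
  then show ?thesis
    by blast
qed

lemma Dh_bounded_lipschitz: "bounded_lipschitz_on collar (Dh i j vs)"
proof -
  obtain B where B: "\<And>z. z \<in> collar \<Longrightarrow> \<bar>Dh i j vs z\<bar> \<le> B * prod_list (map norm vs)"
    using Dh_bound by blast
  obtain M where M: "\<And>z w. z \<in> collar \<Longrightarrow> \<bar>Dh i j (w # vs) z\<bar> \<le> M * norm w"
    using Dh_derivative_bound by blast
  have "(max M 0)-lipschitz_on collar (Dh i j vs)"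
  proof (rule bounded_derivative_imp_lipschitz[OF Dh_deriv])
    fix z assume "z \<in> collar"
    then show "onorm (\<lambda>w. Dh i j (w # vs) z) \<le> max M 0"
      using M by (intro onorm_le) (simp, meson max.cobounded1 mult_right_mono norm_ge_zero order_trans)
  qed (auto intro: convex_Times)
  with B show ?thesis
    by (rule bounded_lipschitz_onI)
qed

lemma h_entry_has_derivative:
  "z \<in> collar \<Longrightarrow> ((\<lambda>z. h (fst z) (snd z) $ i $ j) has_derivative (\<lambda>w. Dh i j [w] z)) (at z within collar)"
  by (rule has_derivative_transform[OF _ _ Dh_deriv[of z i j "[]"]]) (auto simp: Dh_Nil)

lemma cometric_inverse:
  assumes "x \<in> {0..x0}"
  shows "h x y ** cometric h x y = mat 1" "cometric h x y ** h x y = mat 1"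
  using posdef_matrix_inv[OF c_pos posdef[OF assms]] by (simp_all add: cometric_def)

lemma cometric_symmetric: "x \<in> {0..x0} \<Longrightarrow> transpose (cometric h x y) = cometric h x y"
  using transpose_inverse_of_symmetric[OF cometric_inverse symmetric] .

lemma cometric_entry_bound: "x \<in> {0..x0} \<Longrightarrow> \<bar>cometric h x y $ i $ j\<bar> \<le> 1 / c"
  unfolding cometric_def using c_pos posdef by (rule posdef_matrix_inv_entry_bound)

lemma cometric_entry_has_derivative:
  assumes z: "z \<in> collar"
  shows "((\<lambda>z. cometric h (fst z) (snd z) $ i $ j) has_derivative
      (\<lambda>w. - (\<Sum>k\<in>UNIV. \<Sum>l\<in>UNIV.
          cometric h (fst z) (snd z) $ i $ k * Dh k l [w] z * cometric h (fst z) (snd z) $ l $ j)))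
    (at z within collar)"
  unfolding cometric_def
  using c_pos posdef z h_entry_has_derivative[OF z]
  by (intro has_derivative_inverse_entry) (auto simp: mem_Times_iff)

lemma cometric_entry_bounded_lipschitz:
  "bounded_lipschitz_on collar (\<lambda>z. cometric h (fst z) (snd z) $ i $ j)"
proof -
  have "\<forall>k l. \<exists>M. \<forall>z\<in>collar. \<forall>w. \<bar>Dh k l [w] z\<bar> \<le> M * norm w"
    using Dh_derivative_bound by blast
  then obtain M where M: "\<And>k l z w. z \<in> collar \<Longrightarrow> \<bar>Dh k l [w] z\<bar> \<le> M k l * norm w"
    by metis
  define L where "L = (\<Sum>k\<in>UNIV. \<Sum>l\<in>UNIV. 1/c * \<bar>M k l\<bar> * (1/c))"
  have "L-lipschitz_on collar (\<lambda>z. cometric h (fst z) (snd z) $ i $ j)"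
  proof (rule bounded_derivative_imp_lipschitz[OF cometric_entry_has_derivative])
    fix z :: "real \<times> (real^'n)" assume z: "z \<in> collar"
    show "onorm (\<lambda>w. - (\<Sum>k\<in>UNIV. \<Sum>l\<in>UNIV.
        cometric h (fst z) (snd z) $ i $ k * Dh k l [w] z * cometric h (fst z) (snd z) $ l $ j)) \<le> L"
    proof (rule onorm_le)
      fix w
      have "norm (- (\<Sum>k\<in>UNIV. \<Sum>l\<in>UNIV.
          cometric h (fst z) (snd z) $ i $ k * Dh k l [w] z * cometric h (fst z) (snd z) $ l $ j))
        \<le> (\<Sum>k\<in>UNIV. \<Sum>l\<in>UNIV. 1/c * (\<bar>M k l\<bar> * norm w) * (1/c))"
        unfolding real_norm_def abs_minus_cancel
      proof (rule order_trans[OF sum_abs sum_mono[OF order_trans[OF sum_abs sum_mono]]])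
        fix k l
        have "\<bar>cometric h (fst z) (snd z) $ i $ k\<bar> \<le> 1/c" "\<bar>cometric h (fst z) (snd z) $ l $ j\<bar> \<le> 1/c"
          using z by (auto simp: mem_Times_iff intro: cometric_entry_bound)
        moreover have "\<bar>Dh k l [w] z\<bar> \<le> \<bar>M k l\<bar> * norm w"
          using M[OF z, of k l w] by (meson abs_ge_self mult_right_mono norm_ge_zero order_trans)
        ultimately show "\<bar>cometric h (fst z) (snd z) $ i $ k * Dh k l [w] z * cometric h (fst z) (snd z) $ l $ j\<bar>
            \<le> 1/c * (\<bar>M k l\<bar> * norm w) * (1/c)"
          unfolding abs_mult using c_pos by (intro mult_mono) auto
      qed
      also have "\<dots> = L * norm w"
        by (simp add: L_def sum_distrib_left sum_distrib_right ac_simps)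
      finally show "norm (- (\<Sum>k\<in>UNIV. \<Sum>l\<in>UNIV.
          cometric h (fst z) (snd z) $ i $ k * Dh k l [w] z * cometric h (fst z) (snd z) $ l $ j)) \<le> L * norm w" .
    qed
  qed (auto intro: convex_Times simp: L_def c_pos sum_nonneg)
  moreover have "\<bar>cometric h (fst z) (snd z) $ i $ j\<bar> \<le> 1 / c" if "z \<in> collar" for z
    using that by (auto simp: mem_Times_iff intro: cometric_entry_bound)
  ultimately show ?thesis
    by (intro bounded_lipschitz_onI)
qed

definition conorm_deriv :: "real \<times> (real^'n) \<Rightarrow> real^'n \<Rightarrow> real \<times> (real^'n) \<Rightarrow> real" where
  "conorm_deriv z E w = (\<Sum>i\<in>UNIV. \<Sum>j\<in>UNIV. E $ i * E $ j *
      - (\<Sum>k\<in>UNIV. \<Sum>l\<in>UNIV.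
          cometric h (fst z) (snd z) $ i $ k * Dh k l [w] z * cometric h (fst z) (snd z) $ l $ j))"

definition conorm_dx :: "real \<times> (real^'n) \<Rightarrow> real^'n \<Rightarrow> real" where
  "conorm_dx z E = conorm_deriv z E (1, 0)"

definition conorm_dy :: "real \<times> (real^'n) \<Rightarrow> real^'n \<Rightarrow> real^'n" where
  "conorm_dy z E = (\<chi> m. conorm_deriv z E (0, axis m 1))"

lemma conorm2_eq_sum: "conorm2 h x y E = (\<Sum>i\<in>UNIV. \<Sum>j\<in>UNIV. E $ i * E $ j * cometric h x y $ i $ j)"
  by (simp add: conorm2_def matrix_bilinear_eq_sum)

lemma conorm2_has_derivative:
  "z \<in> collar \<Longrightarrow> ((\<lambda>z. conorm2 h (fst z) (snd z) E) has_derivative conorm_deriv z E) (at z within collar)"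
  unfolding conorm2_eq_sum conorm_deriv_def[abs_def]
  by (intro has_derivative_sum has_derivative_mult_right cometric_entry_has_derivative)

lemma conorm_deriv_Pair:
  assumes z: "z \<in> collar"
  shows "conorm_deriv z E (a, v) = a * conorm_dx z E + conorm_dy z E \<bullet> v"
proof -
  interpret linear "conorm_deriv z E"
    using conorm2_has_derivative[OF z] by (rule has_derivative_linear)
  have "(a, v) = a *\<^sub>R (1, 0) + (\<Sum>m\<in>UNIV. (v $ m) *\<^sub>R (0, axis m 1))"
  proof -
    have "(\<Sum>m\<in>UNIV. (v $ m) *\<^sub>R ((0::real), axis m (1::real))) = (0, \<Sum>m\<in>UNIV. (v $ m) *\<^sub>R axis m 1)"
      by (induction rule: infinite_finite_induct) (auto simp: zero_prod_def)
    also have "(\<Sum>m\<in>UNIV. (v $ m) *\<^sub>R axis m (1::real)) = v"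
      using basis_expansion[of v] by (simp add: scalar_mult_eq_scaleR)
    finally show ?thesis
      by simp
  qed
  then have "conorm_deriv z E (a, v) = conorm_deriv z E (a *\<^sub>R (1, 0) + (\<Sum>m\<in>UNIV. (v $ m) *\<^sub>R (0, axis m 1)))"
    by simp
  also have "\<dots> = a * conorm_deriv z E (1, 0) + (\<Sum>m\<in>UNIV. v $ m * conorm_deriv z E (0, axis m 1))"
    by (simp only: add scale sum real_scaleR_def)
  finally show ?thesis
    by (simp add: conorm_dx_def conorm_dy_def inner_vec_def mult.commute)
qed

lemma conorm2_has_real_derivative_x:
  assumes "0 \<le> x" "x < x0"
  shows "((\<lambda>x. conorm2 h x y E) has_real_derivative conorm_dx (x, y) E) (at x within {0..})"
proof -
  have z: "(x, y) \<in> collar"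
    using assms by auto
  have "((\<lambda>x. (\<lambda>z. conorm2 h (fst z) (snd z) E) (x, y)) has_derivative (\<lambda>d. conorm_deriv (x, y) E (d, 0)))
      (at x within {0..x0})"
    using z by (intro has_derivative_in_compose2[OF conorm2_has_derivative]) (auto intro!: derivative_eq_intros)
  moreover have "(\<lambda>d. conorm_deriv (x, y) E (d, 0)) = (*) (conorm_dx (x, y) E)"
    by (simp add: fun_eq_iff conorm_deriv_Pair[OF z] mult.commute)
  ultimately have "((\<lambda>x. conorm2 h x y E) has_real_derivative conorm_dx (x, y) E) (at x within {0..x0})"
    by (simp add: has_field_derivative_def)
  moreover have "at x within {0..} = at x within {0..x0}"
    by (rule at_within_nhd[of _ "{..<x0}"]) (use assms in auto)
  ultimately show ?thesis
    by simp
qed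

lemma conorm2_has_derivative_y:
  assumes "x \<in> {0..x0}"
  shows "((\<lambda>y. conorm2 h x y E) has_derivative (\<lambda>v. conorm_dy (x, y) E \<bullet> v)) (at y)"
proof -
  have z: "(x, y) \<in> collar"
    using assms by auto
  have "((\<lambda>y. (\<lambda>z. conorm2 h (fst z) (snd z) E) (x, y)) has_derivative (\<lambda>v. conorm_deriv (x, y) E (0, v)))
      (at y within UNIV)"
    using assms by (intro has_derivative_in_compose2[OF conorm2_has_derivative]) (auto intro!: derivative_eq_intros)
  then show ?thesis
    by (simp add: conorm_deriv_Pair[OF z])
qed

lemma cometric_entry_has_derivative_along:
  assumes t: "t \<in> S" and \<gamma>: "(\<gamma> has_vector_derivative \<gamma>') (at t within S)" "\<gamma> ` S \<subseteq> collar"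
  shows "((\<lambda>t. cometric h (fst (\<gamma> t)) (snd (\<gamma> t)) $ i $ j) has_real_derivative
      - (\<Sum>k\<in>UNIV. \<Sum>l\<in>UNIV.
          cometric h (fst (\<gamma> t)) (snd (\<gamma> t)) $ i $ k * Dh k l [\<gamma>'] (\<gamma> t) * cometric h (fst (\<gamma> t)) (snd (\<gamma> t)) $ l $ j))
    (at t within S)"
proof -
  have "\<gamma> t \<in> collar"
    using \<gamma>(2) t by blast
  then have "Dh k l [d *\<^sub>R \<gamma>'] (\<gamma> t) = d * Dh k l [\<gamma>'] (\<gamma> t)" for k l d
    using linear_scale[OF Dh_linear] by simp
  moreover have "((\<lambda>t. cometric h (fst (\<gamma> t)) (snd (\<gamma> t)) $ i $ j) has_derivative
      (\<lambda>d. - (\<Sum>k\<in>UNIV. \<Sum>l\<in>UNIV. cometric h (fst (\<gamma> t)) (snd (\<gamma> t)) $ i $ k * Dh k l [d *\<^sub>R \<gamma>'] (\<gamma> t)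
        * cometric h (fst (\<gamma> t)) (snd (\<gamma> t)) $ l $ j))) (at t within S)"
    by (rule has_derivative_in_compose2[OF cometric_entry_has_derivative \<gamma>(2) t])
       (use \<gamma>(1)[unfolded has_vector_derivative_def] in auto)
  ultimately show ?thesis
    by (intro has_derivative_imp_has_field_derivative) (auto simp: sum_distrib_left ac_simps)
qed

lemma conorm2_has_derivative_along:
  assumes t: "t \<in> S" and \<gamma>: "(\<gamma> has_vector_derivative \<gamma>') (at t within S)" "\<gamma> ` S \<subseteq> collar"
    and E: "(E has_vector_derivative E') (at t within S)"
  shows "((\<lambda>t. conorm2 h (fst (\<gamma> t)) (snd (\<gamma> t)) (E t)) has_real_derivative
      conorm_deriv (\<gamma> t) (E t) \<gamma>' + 2 * (E' \<bullet> (cometric h (fst (\<gamma> t)) (snd (\<gamma> t)) *v E t))) (at t within S)"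
proof -
  define N where "N = cometric h (fst (\<gamma> t)) (snd (\<gamma> t))"
  have \<gamma>t: "\<gamma> t \<in> collar"
    using \<gamma>(2) t by blast
  define N' where "N' i j = - (\<Sum>k\<in>UNIV. \<Sum>l\<in>UNIV. N $ i $ k * Dh k l [\<gamma>'] (\<gamma> t) * N $ l $ j)" for i j
  have dN: "((\<lambda>t. cometric h (fst (\<gamma> t)) (snd (\<gamma> t)) $ i $ j) has_real_derivative N' i j) (at t within S)" for i j
    unfolding N'_def N_def by (rule cometric_entry_has_derivative_along[OF t \<gamma>])
  have dE: "((\<lambda>t. E t $ i) has_real_derivative E' $ i) (at t within S)" for i
    using bounded_linear.has_derivative[OF bounded_linear_vec_nth E[unfolded has_vector_derivative_def]]
    by (simp add: has_field_derivative_def mult_commute_abs)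
  have "((\<lambda>t. conorm2 h (fst (\<gamma> t)) (snd (\<gamma> t)) (E t)) has_real_derivative
      (\<Sum>i\<in>UNIV. \<Sum>j\<in>UNIV. (E' $ i * E t $ j + E' $ j * E t $ i) * N $ i $ j + N' i j * (E t $ i * E t $ j)))
    (at t within S)"
    unfolding conorm2_eq_sum N_def by (intro DERIV_sum DERIV_mult dE dN)
  moreover have "(\<Sum>i\<in>UNIV. \<Sum>j\<in>UNIV. (E' $ i * E t $ j + E' $ j * E t $ i) * N $ i $ j)
      = 2 * (E' \<bullet> (N *v E t))"
  proof -
    have "E t \<bullet> (N *v E') = E' \<bullet> (N *v E t)"
      using matrix_bilinear_symmetric[OF cometric_symmetric] \<gamma>t by (auto simp: N_def mem_Times_iff)
    moreover have "(\<Sum>i\<in>UNIV. \<Sum>j\<in>UNIV. (E' $ i * E t $ j + E' $ j * E t $ i) * N $ i $ j)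
        = (\<Sum>i\<in>UNIV. \<Sum>j\<in>UNIV. E' $ i * E t $ j * N $ i $ j) + (\<Sum>i\<in>UNIV. \<Sum>j\<in>UNIV. E t $ i * E' $ j * N $ i $ j)"
      by (simp add: algebra_simps sum.distrib)
    ultimately show ?thesis
      by (simp add: matrix_bilinear_eq_sum)
  qed
  moreover have "(\<Sum>i\<in>UNIV. \<Sum>j\<in>UNIV. N' i j * (E t $ i * E t $ j)) = conorm_deriv (\<gamma> t) (E t) \<gamma>'"
    by (simp add: conorm_deriv_def N'_def N_def mult.commute)
  ultimately show ?thesis
    by (simp add: sum.distrib N_def add.commute)
qed

text \<open>Outside the collar and away from the initial covector the coefficients are
  frozen by clamping, which makes them globally bounded and Lipschitz without
  changing them along the short geodesics.\<close>

definition state_box :: "real^'n \<Rightarrow> (real \<times> (real^'n) \<times> (real^'n)) set" where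
  "state_box e0 = {0..x0} \<times> UNIV \<times> cbox (e0 - 1) (e0 + 1)"

definition clamp_state :: "real^'n \<Rightarrow> real \<times> (real^'n) \<times> (real^'n) \<Rightarrow> real \<times> (real^'n) \<times> (real^'n)" where
  "clamp_state e0 w = (clamp 0 x0 (fst w), fst (snd w), clamp (e0 - 1) (e0 + 1) (snd (snd w)))"

definition clamped_conorm2 :: "real^'n \<Rightarrow> real \<times> (real^'n) \<times> (real^'n) \<Rightarrow> real" where
  "clamped_conorm2 e0 w = (case clamp_state e0 w of (x, y, E) \<Rightarrow> conorm2 h x y E)"

definition clamped_dx :: "real^'n \<Rightarrow> real \<times> (real^'n) \<times> (real^'n) \<Rightarrow> real" where
  "clamped_dx e0 w = (case clamp_state e0 w of (x, y, E) \<Rightarrow> conorm_dx (x, y) E)"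

definition clamped_dy :: "real^'n \<Rightarrow> 'n \<Rightarrow> real \<times> (real^'n) \<times> (real^'n) \<Rightarrow> real" where
  "clamped_dy e0 m w = (case clamp_state e0 w of (x, y, E) \<Rightarrow> conorm_dy (x, y) E $ m)"

definition clamped_velocity :: "real^'n \<Rightarrow> 'n \<Rightarrow> real \<times> (real^'n) \<times> (real^'n) \<Rightarrow> real" where
  "clamped_velocity e0 i w = (case clamp_state e0 w of (x, y, E) \<Rightarrow> (cometric h x y *v E) $ i)"

lemma clamp_state_in_box: "clamp_state e0 w \<in> state_box e0"
proof -
  have "(e0 - 1) \<bullet> i \<le> (e0 + 1) \<bullet> i" if "i \<in> Basis" for i
    using that by (auto simp: Basis_vec_def inner_axis)
  then show ?thesis
    using clamp_in_interval[of 0 x0] x0_pos by (simp add: clamp_state_def state_box_def)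
qed

lemma clamp_state_id:
  "x \<in> {0..x0} \<Longrightarrow> E \<in> cbox (e0 - 1) (e0 + 1) \<Longrightarrow> clamp_state e0 (x, y, E) = (x, y, E)"
  by (simp add: clamp_state_def)

lemma lipschitz_clamp_state: "1-lipschitz_on UNIV (clamp_state e0)"
proof (rule lipschitz_onI)
  fix w w' :: "real \<times> (real^'n) \<times> (real^'n)"
  obtain x y E x' y' E' where w: "w = (x, y, E)" "w' = (x', y', E')"
    by (cases w, cases w') auto
  have "dist (clamp 0 x0 x) (clamp 0 x0 x') \<le> dist x x'"
    "dist (clamp (e0 - 1) (e0 + 1) E) (clamp (e0 - 1) (e0 + 1) E') \<le> dist E E'"
    by (rule dist_clamps_le_dist_args)+
  then show "dist (clamp_state e0 w) (clamp_state e0 w') \<le> 1 * dist w w'"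
    unfolding w clamp_state_def dist_Pair_Pair
    by (auto intro!: real_sqrt_le_mono add_mono power_mono)
qed simp

lemma bounded_lipschitz_clamp_state:
  "bounded_lipschitz_on (state_box e0) F \<Longrightarrow> bounded_lipschitz_on UNIV (\<lambda>w. F (clamp_state e0 w))"
  using lipschitz_clamp_state clamp_state_in_box by (blast intro: bounded_lipschitz_on_compose)

lemma box_covector_bounded_lipschitz: "bounded_lipschitz_on (state_box e0) (\<lambda>w. snd (snd w) $ i)"
proof (rule bounded_lipschitz_onI)
  fix w assume "w \<in> state_box e0"
  then show "\<bar>snd (snd w) $ i\<bar> \<le> \<bar>e0 $ i\<bar> + 1"
    by (auto simp: state_box_def mem_box_cart mem_Times_iff abs_le_iff dest!: spec[of _ i])
next
  show "1-lipschitz_on (state_box e0) (\<lambda>w. snd (snd w) $ i)"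
    by (rule lipschitz_onI) (auto intro: order_trans[OF dist_vec_nth_le] order_trans[OF dist_snd_le])
qed

lemma box_collar_bounded_lipschitz:
  assumes "bounded_lipschitz_on collar f"
  shows "bounded_lipschitz_on (state_box e0) (\<lambda>w. f (fst w, fst (snd w)))"
proof (rule bounded_lipschitz_on_compose[OF assms])
  show "1-lipschitz_on (state_box e0) (\<lambda>w. (fst w, fst (snd w)))"
  proof (rule lipschitz_onI)
    fix w w' :: "real \<times> (real^'n) \<times> (real^'n)"
    have "dist (fst (snd w)) (fst (snd w')) \<le> dist (snd w) (snd w')"
      by (rule dist_fst_le)
    then show "dist (fst w, fst (snd w)) (fst w', fst (snd w')) \<le> 1 * dist w w'"
      unfolding dist_prod_def[of w] by (auto intro!: real_sqrt_le_mono power_mono simp: dist_Pair_Pair)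
  qed simp
  show "(\<lambda>w. (fst w, fst (snd w))) ` state_box e0 \<subseteq> collar"
    by (auto simp: state_box_def)
qed

lemma clamped_conorm2_bounded_lipschitz: "bounded_lipschitz_on UNIV (clamped_conorm2 e0)"
proof -
  have "bounded_lipschitz_on (state_box e0) (\<lambda>w. conorm2 h (fst w) (fst (snd w)) (snd (snd w)))"
    unfolding conorm2_eq_sum
    by (intro bounded_lipschitz_on_sum bounded_lipschitz_on_mult box_covector_bounded_lipschitz
        box_collar_bounded_lipschitz[OF cometric_entry_bounded_lipschitz, simplified])
  then show ?thesis
    unfolding clamped_conorm2_def split_beta by (rule bounded_lipschitz_clamp_state)
qed

lemma clamped_dx_bounded_lipschitz: "bounded_lipschitz_on UNIV (clamped_dx e0)"
proof -
  have "bounded_lipschitz_on (state_box e0) (\<lambda>w. conorm_dx (fst w, fst (snd w)) (snd (snd w)))"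
    unfolding conorm_dx_def conorm_deriv_def fst_conv snd_conv
    by (intro bounded_lipschitz_on_sum bounded_lipschitz_on_mult bounded_lipschitz_on_minus
        box_covector_bounded_lipschitz box_collar_bounded_lipschitz Dh_bounded_lipschitz
        box_collar_bounded_lipschitz[OF cometric_entry_bounded_lipschitz, simplified])
  then show ?thesis
    unfolding clamped_dx_def split_beta by (rule bounded_lipschitz_clamp_state)
qed

lemma clamped_dy_bounded_lipschitz: "bounded_lipschitz_on UNIV (clamped_dy e0 m)"
proof -
  have "bounded_lipschitz_on (state_box e0) (\<lambda>w. conorm_dy (fst w, fst (snd w)) (snd (snd w)) $ m)"
    unfolding conorm_dy_def conorm_deriv_def fst_conv snd_conv vec_lambda_beta
    by (intro bounded_lipschitz_on_sum bounded_lipschitz_on_mult bounded_lipschitz_on_minus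
        box_covector_bounded_lipschitz box_collar_bounded_lipschitz Dh_bounded_lipschitz
        box_collar_bounded_lipschitz[OF cometric_entry_bounded_lipschitz, simplified])
  then show ?thesis
    unfolding clamped_dy_def split_beta by (rule bounded_lipschitz_clamp_state)
qed

lemma clamped_velocity_bounded_lipschitz: "bounded_lipschitz_on UNIV (clamped_velocity e0 i)"
proof -
  have "bounded_lipschitz_on (state_box e0) (\<lambda>w. (cometric h (fst w) (fst (snd w)) *v snd (snd w)) $ i)"
    unfolding matrix_vector_mult_def vec_lambda_beta
    by (intro bounded_lipschitz_on_sum bounded_lipschitz_on_mult box_covector_bounded_lipschitz
        box_collar_bounded_lipschitz[OF cometric_entry_bounded_lipschitz, simplified])
  then show ?thesis
    unfolding clamped_velocity_def split_beta by (rule bounded_lipschitz_clamp_state)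
qed

lemma clamped_coefficients_bounds:
  "\<exists>B K. (\<forall>i w. \<bar>clamped_velocity e0 i w\<bar> \<le> B) \<and> (\<forall>m w. \<bar>clamped_dy e0 m w\<bar> \<le> B)
     \<and> (\<forall>w. \<bar>clamped_dx e0 w\<bar> \<le> B) \<and> K-lipschitz_on UNIV (clamped_conorm2 e0)"
proof -
  obtain Bv Bm Bx where "\<And>i w. \<bar>clamped_velocity e0 i w\<bar> \<le> Bv" "\<And>m w. \<bar>clamped_dy e0 m w\<bar> \<le> Bm"
    "\<And>w. \<bar>clamped_dx e0 w\<bar> \<le> Bx"
    using uniform_bound_finite[of "clamped_velocity e0"] uniform_bound_finite[of "clamped_dy e0"]
      clamped_velocity_bounded_lipschitz clamped_dy_bounded_lipschitz clamped_dx_bounded_lipschitz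
    unfolding bounded_lipschitz_on_def by (metis UNIV_I)
  moreover obtain K where "K-lipschitz_on UNIV (clamped_conorm2 e0)"
    using clamped_conorm2_bounded_lipschitz unfolding bounded_lipschitz_on_def by blast
  ultimately show ?thesis
    by (intro exI[of _ "max Bv (max Bm Bx)"] exI[of _ K] conjI allI) (auto simp: le_max_iff_disj)
qed

text \<open>Hamilton's equations in the variables \<open>(u, v, y, \<eta>) = (x/s, \<xi>/s, y, \<eta>)\<close>, with
  clamped coefficients; they agree with the true ones while \<open>u \<in> [0, 2]\<close> and \<open>\<eta>\<close> stays near
  \<open>e0\<close>, because \<open>2 s < x0\<close>.\<close>

definition rescaled_point :: "real \<Rightarrow> real \<times> real \<times> (real^'n) \<times> (real^'n) \<Rightarrow> real \<times> (real^'n) \<times> (real^'n)"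
  where "rescaled_point s z = (s * clamp 0 2 (fst z), snd (snd z))"

definition rescaled_field ::
  "real \<Rightarrow> real^'n \<Rightarrow> real \<times> real \<times> (real^'n) \<times> (real^'n) \<Rightarrow> real \<times> real \<times> (real^'n) \<times> (real^'n)"
where
  "rescaled_field s e0 z =
    (let \<mu> = clamp (-2) 2 (fst z); p = rescaled_point s z in
      (fst (snd z),
       - \<mu> * (clamped_conorm2 e0 p + s / 2 * \<mu> * clamped_dx e0 p),
       \<chi> i. s^2 * \<mu>^2 * clamped_velocity e0 i p,
       \<chi> m. - (s^2 / 2 * \<mu>^2) * clamped_dy e0 m p))"

lemma lipschitz_rescaled_point: "\<exists>L. L-lipschitz_on UNIV (rescaled_point s)"
proof -
  have "bounded_lipschitz_on UNIV (\<lambda>z::real \<times> real \<times> (real^'n) \<times> (real^'n). s * clamp 0 2 (fst z))"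
    by (intro bounded_lipschitz_on_mult bounded_lipschitz_on_const bounded_lipschitz_on_clamp[OF lipschitz_on_fst]) simp
  then obtain L where "L-lipschitz_on UNIV (\<lambda>z::real \<times> real \<times> (real^'n) \<times> (real^'n). s * clamp 0 2 (fst z))"
    using bounded_lipschitz_on_imp_lipschitz by blast
  moreover have "(1 * 1)-lipschitz_on UNIV (\<lambda>z::real \<times> real \<times> (real^'n) \<times> (real^'n). snd (snd z))"
    using lipschitz_on_compose2[OF lipschitz_on_snd lipschitz_on_snd] by simp
  ultimately show ?thesis
    unfolding rescaled_point_def[abs_def] using lipschitz_on_Pair by blast
qed

lemma rescaled_field_lipschitz: "\<exists>L. L-lipschitz_on UNIV (rescaled_field s e0)"
proof -
  define \<mu> :: "real \<times> real \<times> (real^'n) \<times> (real^'n) \<Rightarrow> real" where "\<mu> z = clamp (-2) 2 (fst z)" for z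
  have \<mu>: "bounded_lipschitz_on UNIV \<mu>"
    unfolding \<mu>_def[abs_def] by (rule bounded_lipschitz_on_clamp[OF lipschitz_on_fst]) simp
  have along: "bounded_lipschitz_on UNIV F \<Longrightarrow> bounded_lipschitz_on UNIV (\<lambda>z. F (rescaled_point s z))" for F
    using lipschitz_rescaled_point by (blast intro: bounded_lipschitz_on_compose)
  have c1: "(1 * 1)-lipschitz_on UNIV (\<lambda>z::real \<times> real \<times> (real^'n) \<times> (real^'n). fst (snd z))"
    using lipschitz_on_compose2[OF lipschitz_on_snd lipschitz_on_fst] by simp
  have "bounded_lipschitz_on UNIV (\<lambda>z. - \<mu> z * (clamped_conorm2 e0 (rescaled_point s z)
      + s / 2 * \<mu> z * clamped_dx e0 (rescaled_point s z)))"
    by (intro bounded_lipschitz_on_mult bounded_lipschitz_on_minus bounded_lipschitz_on_add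
        bounded_lipschitz_on_const \<mu> along clamped_conorm2_bounded_lipschitz clamped_dx_bounded_lipschitz)
  then obtain L2 where c2: "L2-lipschitz_on UNIV (\<lambda>z. - \<mu> z * (clamped_conorm2 e0 (rescaled_point s z)
      + s / 2 * \<mu> z * clamped_dx e0 (rescaled_point s z)))"
    using bounded_lipschitz_on_imp_lipschitz by blast
  have "\<exists>L. L-lipschitz_on UNIV (\<lambda>z. \<chi> i. s^2 * \<mu> z ^ 2 * clamped_velocity e0 i (rescaled_point s z))"
    unfolding power2_eq_square[of "\<mu> _"]
    by (intro lipschitz_on_vec_lambda bounded_lipschitz_on_imp_lipschitz bounded_lipschitz_on_mult
        bounded_lipschitz_on_const \<mu> along clamped_velocity_bounded_lipschitz)
  then obtain L3 where c3: "L3-lipschitz_on UNIV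
      (\<lambda>z. \<chi> i. s^2 * \<mu> z ^ 2 * clamped_velocity e0 i (rescaled_point s z))"
    by blast
  have "\<exists>L. L-lipschitz_on UNIV (\<lambda>z. \<chi> m. - (s^2 / 2 * \<mu> z ^ 2) * clamped_dy e0 m (rescaled_point s z))"
    unfolding power2_eq_square[of "\<mu> _"]
    by (intro lipschitz_on_vec_lambda bounded_lipschitz_on_imp_lipschitz bounded_lipschitz_on_mult
        bounded_lipschitz_on_minus bounded_lipschitz_on_const \<mu> along clamped_dy_bounded_lipschitz)
  then obtain L4 where c4: "L4-lipschitz_on UNIV
      (\<lambda>z. \<chi> m. - (s^2 / 2 * \<mu> z ^ 2) * clamped_dy e0 m (rescaled_point s z))"
    by blast
  have "rescaled_field s e0 = (\<lambda>z. (fst (snd z),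
      - \<mu> z * (clamped_conorm2 e0 (rescaled_point s z) + s / 2 * \<mu> z * clamped_dx e0 (rescaled_point s z)),
      \<chi> i. s^2 * \<mu> z ^ 2 * clamped_velocity e0 i (rescaled_point s z),
      \<chi> m. - (s^2 / 2 * \<mu> z ^ 2) * clamped_dy e0 m (rescaled_point s z)))"
    by (simp add: fun_eq_iff rescaled_field_def Let_def \<mu>_def)
  then show ?thesis
    using lipschitz_on_Pair[OF c1 lipschitz_on_Pair[OF c2 lipschitz_on_Pair[OF c3 c4]]] by auto
qed

end

section \<open>The rescaled short geodesic\<close>

locale short_geodesic = gas_giant_collar h x0 c Dh
  for h :: "real \<Rightarrow> real^'n \<Rightarrow> real^'n^'n" and x0 c Dh +
  fixes y0 e0 :: "real^'n" and B K s :: real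
    and \<phi> :: "real \<Rightarrow> real \<times> real \<times> (real^'n) \<times> (real^'n)"
  assumes unit_covector: "conorm2 h 0 y0 e0 = 1"
    and velocity_bound: "\<And>i w. \<bar>clamped_velocity e0 i w\<bar> \<le> B"
    and dy_bound: "\<And>m w. \<bar>clamped_dy e0 m w\<bar> \<le> B"
    and dx_bound: "\<And>w. \<bar>clamped_dx e0 w\<bar> \<le> B"
    and conorm_lipschitz: "K-lipschitz_on UNIV (clamped_conorm2 e0)"
    and s_pos: "0 < s" and s_le_1: "s \<le> 1" and s_in_collar: "2 * s < x0"
    and s_drift: "16 * CARD('n) * B * s < 1"
    and s_error: "s * (K * (2 + 32 * CARD('n) * B) + B) \<le> exp (-12) / 100"
    and \<phi>_0: "\<phi> 0 = (0, 1, y0, e0)"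
    and \<phi>_cont: "continuous_on {0..4} \<phi>"
    and \<phi>_deriv: "\<And>t. t \<in> {0..4} \<Longrightarrow> (\<phi> has_vector_derivative rescaled_field s e0 (\<phi> t)) (at t within {0..4})"
begin

definition u where "u t = fst (\<phi> t)"
definition v where "v t = fst (snd (\<phi> t))"
definition Y where "Y t = fst (snd (snd (\<phi> t)))"
definition Eta where "Eta t = snd (snd (snd (\<phi> t)))"

definition coeff_point where "coeff_point t = (s * clamp 0 2 (u t), Y t, Eta t)"
definition Q where
  "Q t = clamped_conorm2 e0 (coeff_point t) + s / 2 * clamp (-2) 2 (u t) * clamped_dx e0 (coeff_point t)"
definition dY where
  "dY t = (\<chi> i. s^2 * (clamp (-2) 2 (u t))^2 * clamped_velocity e0 i (coeff_point t))"
definition dEta where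
  "dEta t = (\<chi> m. - (s^2 / 2 * (clamp (-2) 2 (u t))^2) * clamped_dy e0 m (coeff_point t))"

definition drift_rate where "drift_rate = 4 * CARD('n) * B"

definition \<epsilon> where "\<epsilon> = s * (K * (2 + 8 * drift_rate) + B)"

lemma initial_values: "u 0 = 0" "v 0 = 1" "Y 0 = y0" "Eta 0 = e0"
  by (simp_all add: u_def v_def Y_def Eta_def \<phi>_0)

lemma rescaled_field_along:
  "rescaled_field s e0 (\<phi> t) = (v t, - clamp (-2) 2 (u t) * Q t, dY t, dEta t)"
  by (simp add: rescaled_field_def rescaled_point_def Let_def u_def v_def Y_def Eta_def coeff_point_def
      Q_def dY_def dEta_def)

lemma u_deriv: "t \<in> {0..4} \<Longrightarrow> (u has_real_derivative v t) (at t within {0..4})"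
  using has_vector_derivative_fst[OF \<phi>_deriv[of t]]
  by (simp add: u_def[abs_def] rescaled_field_along has_real_derivative_iff_has_vector_derivative)

lemma v_deriv: "t \<in> {0..4} \<Longrightarrow> (v has_real_derivative - clamp (-2) 2 (u t) * Q t) (at t within {0..4})"
  using has_vector_derivative_fst[OF has_vector_derivative_snd[OF \<phi>_deriv[of t]]]
  by (simp add: v_def[abs_def] rescaled_field_along has_real_derivative_iff_has_vector_derivative)

lemma Y_deriv: "t \<in> {0..4} \<Longrightarrow> (Y has_vector_derivative dY t) (at t within {0..4})"
  using has_vector_derivative_fst[OF has_vector_derivative_snd[OF has_vector_derivative_snd[OF \<phi>_deriv[of t]]]]
  by (simp add: Y_def[abs_def] rescaled_field_along)

lemma Eta_deriv: "t \<in> {0..4} \<Longrightarrow> (Eta has_vector_derivative dEta t) (at t within {0..4})"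
  using has_vector_derivative_snd[OF has_vector_derivative_snd[OF has_vector_derivative_snd[OF \<phi>_deriv[of t]]]]
  by (simp add: Eta_def[abs_def] rescaled_field_along)

lemma B_nonneg: "0 \<le> B"
  using dx_bound[of undefined] by linarith

lemma K_nonneg: "0 \<le> K"
  using conorm_lipschitz by (rule lipschitz_on_nonneg)

lemma drift_rate_nonneg: "0 \<le> drift_rate"
  using B_nonneg by (simp add: drift_rate_def)

lemma dY_norm: "norm (dY t) \<le> drift_rate * s^2"
proof -
  have "\<bar>s^2 * (clamp (-2) 2 (u t))^2 * clamped_velocity e0 i (coeff_point t)\<bar> \<le> s^2 * (4 * B)" for i
    using mult_mono[OF power2_clamp_symmetric[of 2, simplified] velocity_bound[of i "coeff_point t"]] B_nonneg
    by (simp add: abs_mult mult.assoc mult_left_mono)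
  then have "norm (dY t) \<le> CARD('n) * (s^2 * (4 * B))"
    unfolding dY_def by (rule norm_vec_lambda_le)
  then show ?thesis
    by (simp add: drift_rate_def ac_simps)
qed

lemma dEta_norm: "norm (dEta t) \<le> drift_rate * s^2"
proof -
  have dy_abs: "\<bar>(clamp (-2) 2 (u t))^2 * clamped_dy e0 m (coeff_point t)\<bar> \<le> 4 * B" for m
    using mult_mono[OF power2_clamp_symmetric[of 2, simplified] dy_bound[of m "coeff_point t"]] B_nonneg by (simp add: abs_mult)
  have "\<bar>- (s^2 / 2 * (clamp (-2) 2 (u t))^2) * clamped_dy e0 m (coeff_point t)\<bar> \<le> s^2 * (4 * B)" for m
  proof -
    have "\<bar>- (s^2 / 2 * (clamp (-2) 2 (u t))^2) * clamped_dy e0 m (coeff_point t)\<bar>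
        = s^2 / 2 * \<bar>(clamp (-2) 2 (u t))^2 * clamped_dy e0 m (coeff_point t)\<bar>"
      by (simp add: abs_mult)
    also have "\<dots> \<le> s^2 / 2 * (4 * B)"
      using dy_abs[of m] by (rule mult_left_mono) simp
    also have "\<dots> \<le> s^2 * (4 * B)"
      using B_nonneg by (intro mult_right_mono) auto
    finally show ?thesis .
  qed
  then have "norm (dEta t) \<le> CARD('n) * (s^2 * (4 * B))"
    unfolding dEta_def by (rule norm_vec_lambda_le)
  then show ?thesis
    by (simp add: drift_rate_def ac_simps)
qed

lemma drift:
  assumes t: "t \<in> {0..4}"
  shows "norm (Y t - y0) \<le> 4 * drift_rate * s^2" "norm (Eta t - e0) \<le> 4 * drift_rate * s^2"
proof -
  have le: "drift_rate * s^2 * t \<le> 4 * drift_rate * s^2"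
    using t drift_rate_nonneg mult_left_mono[of t 4 "drift_rate * s^2"] by (simp add: ac_simps)
  show "norm (Y t - y0) \<le> 4 * drift_rate * s^2"
    using norm_diff_le_derivative_bound[OF t Y_deriv dY_norm] le by (simp add: initial_values)
  show "norm (Eta t - e0) \<le> 4 * drift_rate * s^2"
    using norm_diff_le_derivative_bound[OF t Eta_deriv dEta_norm] le by (simp add: initial_values)
qed

lemma drift_small: "4 * drift_rate * s^2 \<le> 4 * drift_rate * s" "4 * drift_rate * s < 1"
proof -
  have "s^2 \<le> s"
    using s_pos s_le_1 by (simp add: power2_eq_square mult_left_le)
  then show "4 * drift_rate * s^2 \<le> 4 * drift_rate * s"
    using drift_rate_nonneg by (simp add: mult_left_mono)
  show "4 * drift_rate * s < 1"
    using s_drift by (simp add: drift_rate_def)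
qed

lemma Eta_in_box:
  assumes "t \<in> {0..4}"
  shows "Eta t \<in> cbox (e0 - 1) (e0 + 1)"
proof -
  have bound: "\<bar>Eta t $ i - e0 $ i\<bar> \<le> 1" for i
    using component_le_norm_cart[of "Eta t - e0" i] drift(2)[OF assms] drift_small by simp
  have "e0 $ i - 1 \<le> Eta t $ i \<and> Eta t $ i \<le> e0 $ i + 1" for i
    using bound[of i] by (auto simp: abs_le_iff)
  then show ?thesis
    by (simp add: mem_box_cart)
qed

lemma \<epsilon>_bounds: "0 \<le> \<epsilon>" "\<epsilon> \<le> exp (-12) / 100" "\<epsilon> \<le> 1/2"
proof -
  show "0 \<le> \<epsilon>"
    using s_pos K_nonneg B_nonneg drift_rate_nonneg by (simp add: \<epsilon>_def)
  show small: "\<epsilon> \<le> exp (-12) / 100"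
    using s_error by (simp add: \<epsilon>_def drift_rate_def mult.assoc)
  have "exp (-12::real) \<le> 1"
    by simp
  then show "\<epsilon> \<le> 1/2"
    using small by linarith
qed

lemma Q_close: assumes t: "t \<in> {0..4}" shows "\<bar>Q t - 1\<bar> \<le> \<epsilon>"
proof -
  have "e0 \<in> cbox (e0 - 1) (e0 + 1)"
    by (simp add: mem_box_cart)
  then have unit: "clamped_conorm2 e0 (0, y0, e0) = 1"
    using x0_pos unit_covector by (simp add: clamped_conorm2_def clamp_state_id)
  have "dist (coeff_point t) (0, y0, e0) = norm (s * clamp 0 2 (u t), Y t - y0, Eta t - e0)"
    by (simp add: coeff_point_def dist_norm)
  also have "\<dots> \<le> norm (s * clamp 0 2 (u t)) + norm (Y t - y0, Eta t - e0)"
    by (rule norm_Pair_le)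
  also have "\<dots> \<le> 2 * s + (4 * drift_rate * s^2 + 4 * drift_rate * s^2)"
    using order_trans[OF norm_Pair_le add_mono[OF drift[OF t]]] s_pos
    by (intro add_mono) (auto simp: clamp_real abs_mult)
  also have "\<dots> \<le> s * (2 + 8 * drift_rate)"
    using drift_small(1) by (simp add: algebra_simps)
  finally have "\<bar>clamped_conorm2 e0 (coeff_point t) - 1\<bar> \<le> K * (s * (2 + 8 * drift_rate))"
    using lipschitz_onD[OF conorm_lipschitz, of "coeff_point t" "(0, y0, e0)"] K_nonneg unit
    by (simp add: dist_real_def) (meson mult_left_mono order_trans)
  moreover have "\<bar>s / 2 * clamp (-2) 2 (u t) * clamped_dx e0 (coeff_point t)\<bar> \<le> s * B"
  proof -
    have "\<bar>clamp (-2) 2 (u t)\<bar> * \<bar>clamped_dx e0 (coeff_point t)\<bar> \<le> 2 * B"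
      using mult_mono[OF abs_clamp_symmetric[of 2, simplified] dx_bound] by simp
    then show ?thesis
      using s_pos mult_left_mono[of _ "2 * B" "s / 2"] by (simp add: abs_mult mult.assoc)
  qed
  ultimately show ?thesis
    unfolding Q_def \<epsilon>_def by (simp add: algebra_simps)
qed

definition deviation where "deviation t = (u t - sin t)^2 + (v t - cos t)^2"

lemma deviation_deriv:
  assumes t: "t \<in> {0..4}"
  shows "(deviation has_real_derivative
      2 * (u t - sin t) * (v t - cos t) + 2 * (v t - cos t) * (- clamp (-2) 2 (u t) * Q t + sin t))
    (at t within {0..4})"
proof -
  have "((\<lambda>t. u t - sin t) has_real_derivative v t - cos t) (at t within {0..4})"
    by (rule DERIV_diff[OF u_deriv[OF t] has_field_derivative_at_within[OF DERIV_sin]])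
  moreover have "((\<lambda>t. v t - cos t) has_real_derivative - clamp (-2) 2 (u t) * Q t - - sin t)
      (at t within {0..4})"
    by (rule DERIV_diff[OF v_deriv[OF t] has_field_derivative_at_within[OF DERIV_cos]])
  ultimately show ?thesis
    unfolding deviation_def[abs_def]
    by (rule DERIV_cong[OF DERIV_add[OF DERIV_power DERIV_power]]) (simp add: algebra_simps)
qed

lemma deviation_small: assumes t: "t \<in> {0..4}" shows "deviation t \<le> 1/100"
proof -
  have "deviation t + \<epsilon> \<le> (deviation 0 + \<epsilon>) * exp (3 * t)"
  proof (rule gronwall_affine)
    fix x assume x: "x \<in> {0..t}"
    then have x4: "x \<in> {0..4}"
      using t by auto
    show "(deviation has_real_derivative
        2 * (u x - sin x) * (v x - cos x) + 2 * (v x - cos x) * (- clamp (-2) 2 (u x) * Q x + sin x))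
      (at x within {0..t})"
      using t by (intro has_field_derivative_subset[OF deviation_deriv[OF x4]]) auto
    have "sin x \<in> cbox (-2) 2"
      using sin_le_one[of x] sin_ge_minus_one[of x] by (simp only: cbox_interval atLeastAtMost_iff) linarith
    then have "clamp (-2) 2 (sin x) = sin x"
      by (rule clamp_cancel_cbox)
    then have "\<bar>clamp (-2) 2 (u x) - sin x\<bar> \<le> \<bar>u x - sin x\<bar>"
      using dist_clamps_le_dist_args[of "-2" 2 "u x" "sin x"] by (simp add: dist_real_def)
    then show "2 * (u x - sin x) * (v x - cos x) + 2 * (v x - cos x) * (- clamp (-2) 2 (u x) * Q x + sin x)
        \<le> 3 * (deviation x + \<epsilon>)"
      unfolding deviation_def using abs_clamp_symmetric[of 2, simplified] Q_close[OF x4] \<epsilon>_bounds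
      by (intro comparison_derivative_bound) auto
  qed (use t in auto)
  also have "\<dots> \<le> exp (-12) / 100 * exp 12"
    using t \<epsilon>_bounds by (intro mult_mono) (auto simp: deviation_def initial_values)
  also have "\<dots> = 1/100"
    by (simp add: exp_minus field_simps)
  finally show ?thesis
    using \<epsilon>_bounds by linarith
qed

lemma uv_close:
  assumes "t \<in> {0..4}"
  shows "\<bar>u t - sin t\<bar> \<le> 1/10" "\<bar>v t - cos t\<bar> \<le> 1/10"
  using deviation_small[OF assms] zero_le_square[of "u t - sin t"] zero_le_square[of "v t - cos t"]
  unfolding deviation_def power2_eq_square by (intro abs_le_tenth_of_square; linarith)+

lemma u_le: "t \<in> {0..4} \<Longrightarrow> u t \<le> 11/10"
  using uv_close(1)[of t] sin_le_one[of t] by linarith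

lemma u_pos_early: assumes "0 < t" "t \<le> 1/2" shows "0 < u t"
proof -
  have "(u has_real_derivative v x) (at x within {0..t})" if "x \<in> {0..t}" for x
    using that assms by (intro has_field_derivative_subset[OF u_deriv]) auto
  from mvt_within_interval[of 0 t, OF _ this] assms
  obtain \<xi> where \<xi>: "\<xi> \<in> {0..t}" "u t - u 0 = t * v \<xi>"
    by auto
  have "7/8 \<le> cos \<xi>"
    by (rule cos_ge_7_8) (use \<xi>(1) assms in auto)
  moreover have "\<bar>v \<xi> - cos \<xi>\<bar> \<le> 1/10"
    by (rule uv_close) (use \<xi>(1) assms in auto)
  ultimately
  have "0 < v \<xi>"
    by linarith
  then show ?thesis
    using \<xi>(2) assms by (simp add: initial_values)
qed

lemma u_pos_middle: assumes "1/2 \<le> t" "t \<le> pi - 1/2" shows "0 < u t"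
proof -
  have "t \<in> {0..4}"
    using assms pi_less_4 by auto
  then show ?thesis
    using uv_close(1)[of t] sin_ge_1_4[OF assms] unfolding abs_le_iff by linarith
qed

lemma u_neg_late: "u (pi + 1/2) < 0"
proof -
  have "pi + 1/2 \<in> {0..4}"
    using pi_plus_half_le_4 pi_gt3 by auto
  then have "u (pi + 1/2) \<le> sin (pi + 1/2) + 1/10"
    using uv_close(1)[of "pi + 1/2"] unfolding abs_le_iff by linarith
  moreover have "sin (pi + 1/2) = - sin (1/2)"
    by (rule sin_periodic_pi2)
  ultimately show ?thesis
    using sin_half_ge_1_4 by linarith
qed

lemma u_cont: "continuous_on {0..4} u"
  unfolding u_def[abs_def] by (rule continuous_on_fst[OF \<phi>_cont])

definition return_time where "return_time = Inf {t \<in> {pi - 1/2 .. pi + 1/2}. u t = 0}"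

lemma return_time:
  "return_time \<in> {pi - 1/2 .. pi + 1/2}" "u return_time = 0"
  "\<And>t. t \<in> {pi - 1/2 .. pi + 1/2} \<Longrightarrow> u t = 0 \<Longrightarrow> return_time \<le> t"
proof -
  define Z where "Z = {t \<in> {pi - 1/2 .. pi + 1/2}. u t = 0}"
  have cont: "continuous_on {pi - 1/2 .. pi + 1/2} u"
    using pi_plus_half_le_4 pi_gt3 by (intro continuous_on_subset[OF u_cont]) auto
  have "\<exists>x. pi - 1/2 \<le> x \<and> x \<le> pi + 1/2 \<and> u x = 0"
    using u_neg_late u_pos_middle[of "pi - 1/2"] pi_gt3 cont by (intro IVT2') auto
  then have "Z \<noteq> {}"
    by (auto simp: Z_def)
  moreover have below: "bdd_below Z"
    by (rule bdd_belowI[of _ "pi - 1/2"]) (auto simp: Z_def)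
  moreover have "closed Z"
    unfolding Z_def by (rule continuous_closed_preimage_constant[OF cont]) simp
  ultimately have "Inf Z \<in> Z"
    by (rule closed_contains_Inf)
  then show "return_time \<in> {pi - 1/2 .. pi + 1/2}" "u return_time = 0"
    by (auto simp: return_time_def Z_def[symmetric]) (auto simp: Z_def)
  fix t assume "t \<in> {pi - 1/2 .. pi + 1/2}" "u t = 0"
  then show "return_time \<le> t"
    unfolding return_time_def Z_def[symmetric] by (intro cInf_lower[OF _ below]) (simp add: Z_def)
qed

lemma return_time_bounds: "2 < return_time" "return_time \<le> 4"
  using return_time(1) pi_gt3 pi_plus_half_le_4 by auto

lemma u_pos: assumes "0 < t" "t < return_time" shows "0 < u t"
proof (rule ccontr)
  assume nonpos: "\<not> 0 < u t"
  consider "t \<le> 1/2" | "1/2 \<le> t \<and> t \<le> pi - 1/2" | "pi - 1/2 < t"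
    by linarith
  then show False
  proof cases
    case 3
    have "continuous_on {pi - 1/2 .. t} u"
      using assms return_time_bounds pi_gt3 by (intro continuous_on_subset[OF u_cont]) auto
    then obtain x where x: "pi - 1/2 \<le> x" "x \<le> t" "u x = 0"
      using IVT2'[of u t 0 "pi - 1/2"] nonpos u_pos_middle[of "pi - 1/2"] pi_gt3 3 by force
    then have "return_time \<le> x"
      using assms return_time(1) by (intro return_time(3)) auto
    then show False
      using x assms by simp
  qed (use nonpos assms u_pos_early u_pos_middle in auto)
qed

lemma u_range: assumes "t \<in> {0..return_time}" shows "0 \<le> u t" "u t \<le> 11/10"
proof -
  consider "t = 0" | "t = return_time" | "0 < t \<and> t < return_time"
    using assms by fastforce
  then show "0 \<le> u t"
    by cases (auto simp: initial_values return_time(2) intro: less_imp_le u_pos)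
  show "u t \<le> 11/10"
    using assms return_time_bounds by (intro u_le) auto
qed

text \<open>Undoing the rescaling: on \<open>[0, return_time]\<close> the clamps are inactive.\<close>

definition X where "X t = s * u t"
definition Xi where "Xi t = s * v t"

lemma return_time_subset: "{0..return_time} \<subseteq> {0..4}"
  using return_time_bounds by auto

lemma X_in_collar: assumes "t \<in> {0..return_time}" shows "0 \<le> X t" "X t < x0"
proof -
  show "0 \<le> X t"
    using u_range(1)[OF assms] s_pos by (simp add: X_def)
  have "X t \<le> s * (11/10)"
    using u_range(2)[OF assms] s_pos by (simp add: X_def)
  then show "X t < x0"
    using s_in_collar s_pos by linarith
qed

lemma coefficients_along:
  assumes t: "t \<in> {0..return_time}"
  shows "clamped_conorm2 e0 (coeff_point t) = conorm2 h (X t) (Y t) (Eta t)"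
    and "clamped_dx e0 (coeff_point t) = conorm_dx (X t, Y t) (Eta t)"
    and "dY t = (X t)^2 *\<^sub>R (cometric h (X t) (Y t) *v Eta t)"
    and "dEta t = (- (1/2 * (X t)^2)) *\<^sub>R conorm_dy (X t, Y t) (Eta t)"
    and "clamp (-2) 2 (u t) = u t"
proof -
  have state: "clamp_state e0 (coeff_point t) = (X t, Y t, Eta t)"
    and u: "clamp 0 2 (u t) = u t" "clamp (-2) 2 (u t) = u t"
    using u_range[OF t] X_in_collar[OF t] Eta_in_box return_time_subset t
    by (auto simp: coeff_point_def X_def clamp_real clamp_state_id subset_iff)
  show "clamped_conorm2 e0 (coeff_point t) = conorm2 h (X t) (Y t) (Eta t)"
    "clamped_dx e0 (coeff_point t) = conorm_dx (X t, Y t) (Eta t)"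
    by (simp_all add: clamped_conorm2_def clamped_dx_def state)
  show "dY t = (X t)^2 *\<^sub>R (cometric h (X t) (Y t) *v Eta t)"
    "dEta t = (- (1/2 * (X t)^2)) *\<^sub>R conorm_dy (X t, Y t) (Eta t)"
    by (simp_all add: vec_eq_iff dY_def dEta_def clamped_velocity_def clamped_dy_def state u X_def
        power_mult_distrib)
  show "clamp (-2) 2 (u t) = u t"
    by (rule u(2))
qed

lemma X_deriv: "t \<in> {0..return_time} \<Longrightarrow> (X has_real_derivative Xi t) (at t within {0..return_time})"
  unfolding X_def[abs_def] Xi_def
  by (rule has_field_derivative_subset[OF DERIV_cmult[OF u_deriv] return_time_subset]) (use return_time_subset in auto)

lemma Xi_deriv:
  assumes t: "t \<in> {0..return_time}"
  shows "(Xi has_real_derivative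
      - (X t * conorm2 h (X t) (Y t) (Eta t)) - 1/2 * (X t)^2 * conorm_dx (X t, Y t) (Eta t))
    (at t within {0..return_time})"
proof -
  have "(Xi has_real_derivative s * (- clamp (-2) 2 (u t) * Q t)) (at t within {0..return_time})"
    unfolding Xi_def[abs_def]
    by (rule has_field_derivative_subset[OF DERIV_cmult[OF v_deriv] return_time_subset]) (use t return_time_subset in auto)
  moreover have "s * (- clamp (-2) 2 (u t) * Q t)
      = - (X t * conorm2 h (X t) (Y t) (Eta t)) - 1/2 * (X t)^2 * conorm_dx (X t, Y t) (Eta t)"
    using coefficients_along[OF t] by (simp add: Q_def X_def power2_eq_square algebra_simps)
  ultimately show ?thesis
    by simp
qed

lemma Y_deriv_hamilton:
  assumes t: "t \<in> {0..return_time}"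
  shows "(Y has_vector_derivative (X t)^2 *\<^sub>R (cometric h (X t) (Y t) *v Eta t)) (at t within {0..return_time})"
proof -
  have "t \<in> {0..4}"
    using t return_time_subset by auto
  from has_vector_derivative_within_subset[OF Y_deriv[OF this] return_time_subset]
  show ?thesis
    by (simp only: coefficients_along(3)[OF t])
qed

lemma Eta_deriv_hamilton:
  assumes t: "t \<in> {0..return_time}"
  shows "(Eta has_vector_derivative (- (1/2 * (X t)^2)) *\<^sub>R conorm_dy (X t, Y t) (Eta t))
    (at t within {0..return_time})"
proof -
  have "t \<in> {0..4}"
    using t return_time_subset by auto
  from has_vector_derivative_within_subset[OF Eta_deriv[OF this] return_time_subset]
  show ?thesis
    by (simp only: coefficients_along(4)[OF t])
qed

lemma geodesic: "geodesic_flow_curve h X Y Xi Eta return_time"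
  unfolding geodesic_flow_curve_def
proof (intro conjI ballI exI)
  fix t assume t: "t \<in> {0..return_time}"
  show "(X has_real_derivative Xi t) (at t within {0..return_time})"
    by (rule X_deriv[OF t])
  show "(Y has_vector_derivative (X t)^2 *\<^sub>R (cometric h (X t) (Y t) *v Eta t)) (at t within {0..return_time})"
    by (rule Y_deriv_hamilton[OF t])
  show "((\<lambda>x. conorm2 h x (Y t) (Eta t)) has_real_derivative conorm_dx (X t, Y t) (Eta t)) (at (X t) within {0..})"
    using X_in_collar[OF t] by (rule conorm2_has_real_derivative_x)
  show "((\<lambda>y. conorm2 h (X t) y (Eta t)) has_derivative (\<lambda>w. conorm_dy (X t, Y t) (Eta t) \<bullet> w)) (at (Y t))"
    using X_in_collar[OF t] by (intro conorm2_has_derivative_y) auto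
  show "(Xi has_real_derivative
      - (X t * conorm2 h (X t) (Y t) (Eta t)) - 1/2 * (X t)^2 * conorm_dx (X t, Y t) (Eta t))
    (at t within {0..return_time})"
    by (rule Xi_deriv[OF t])
  show "(Eta has_vector_derivative (- (1/2 * (X t)^2)) *\<^sub>R conorm_dy (X t, Y t) (Eta t)) (at t within {0..return_time})"
    by (rule Eta_deriv_hamilton[OF t])
qed (use return_time_bounds in simp)

lemma energy:
  assumes t: "t \<in> {0..return_time}"
  shows "(Xi t)^2 + (X t)^2 * conorm2 h (X t) (Y t) (Eta t) = s^2"
proof -
  define g where "g = (\<lambda>t. conorm2 h (X t) (Y t) (Eta t))"
  have dg: "(g has_real_derivative Xi x * conorm_dx (X x, Y x) (Eta x)) (at x within {0..return_time})"
    if x: "x \<in> {0..return_time}" for x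
  proof -
    have curve: "((\<lambda>t. (X t, Y t)) has_vector_derivative (Xi x, (X x)^2 *\<^sub>R (cometric h (X x) (Y x) *v Eta x)))
        (at x within {0..return_time})"
      using X_deriv[OF x] Y_deriv_hamilton[OF x]
      by (intro has_vector_derivative_Pair) (simp_all add: has_real_derivative_iff_has_vector_derivative)
    have "(\<lambda>t. (X t, Y t)) ` {0..return_time} \<subseteq> collar"
      using X_in_collar by fastforce
    from conorm2_has_derivative_along[OF x curve this Eta_deriv_hamilton[OF x]] X_in_collar[OF x]
    show ?thesis
      by (simp add: g_def conorm_deriv_Pair inner_commute)
  qed
  define H where "H t = (Xi t)^2 + (X t)^2 * g t" for t
  have "(H has_real_derivative 0) (at x within {0..return_time})" if x: "x \<in> {0..return_time}" for x
    unfolding H_def[abs_def]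
    by (rule DERIV_cong[OF DERIV_add[OF DERIV_power[OF Xi_deriv[OF x]] DERIV_mult[OF DERIV_power[OF X_deriv[OF x]] dg[OF x]]]])
       (simp add: g_def algebra_simps power2_eq_square)
  then obtain C where "\<forall>x\<in>{0..return_time}. H x = C"
    using has_field_derivative_zero_constant[of "{0..return_time}" H] by auto
  then have "H t = H 0"
    using t return_time_bounds by auto
  then show ?thesis
    by (simp add: H_def g_def X_def Xi_def initial_values)
qed

lemma length: "g_length_is h X Y return_time (s * return_time)"
  unfolding g_length_is_def
proof (rule has_integral_spike_finite_eq[of "{0, return_time}", THEN iffD1])
  show "((\<lambda>t. s) has_integral s * return_time) {0..return_time}"
    using has_integral_const_real[of s 0 return_time] return_time_bounds by (simp add: mult.commute)
  fix t assume "t \<in> {0..return_time} - {0, return_time}"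
  then have t: "t \<in> {0..return_time}" and "0 < t" "t < return_time"
    by auto
  have X_pos: "0 < X t"
    using u_pos[OF \<open>0 < t\<close> \<open>t < return_time\<close>] s_pos by (simp add: X_def)
  have "vector_derivative X (at t within {0..return_time}) = Xi t"
    using X_deriv[OF t] return_time_bounds
    by (intro vector_derivative_within_closed_interval[OF _ t]) (simp_all add: has_real_derivative_iff_has_vector_derivative)
  moreover have "vector_derivative Y (at t within {0..return_time}) = (X t)^2 *\<^sub>R (cometric h (X t) (Y t) *v Eta t)"
    using Y_deriv_hamilton[OF t] return_time_bounds by (intro vector_derivative_within_closed_interval[OF _ t]) simp_all
  moreover have "h (X t) (Y t) *v (cometric h (X t) (Y t) *v Eta t) = Eta t"
    using cometric_inverse(1)[of "X t" "Y t"] X_in_collar[OF t] by (simp add: matrix_vector_mul_assoc)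
  ultimately have "(vector_derivative X (at t within {0..return_time}))^2
      + vector_derivative Y (at t within {0..return_time}) \<bullet>
          (h (X t) (Y t) *v vector_derivative Y (at t within {0..return_time})) / (X t)^2 = s^2"
    using energy[OF t] X_pos
    by (simp add: matrix_vector_mult_scaleR conorm2_def inner_commute power2_eq_square field_simps)
  then show "sqrt ((vector_derivative X (at t within {0..return_time}))^2
      + vector_derivative Y (at t within {0..return_time}) \<bullet>
          (h (X t) (Y t) *v vector_derivative Y (at t within {0..return_time})) / (X t)^2) = s"
    using s_pos by simp
qed simp

lemma returns_to_boundary:
  "\<exists>T X Y Xi E L. geodesic_flow_curve h X Y Xi E T \<and>
     X 0 = 0 \<and> Y 0 = y0 \<and> Xi 0 = s \<and> E 0 = e0 \<and>
     (\<forall>t\<in>{0<..<T}. 0 < X t) \<and> X T = 0 \<and>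
     0 < T \<and> T \<le> 4 \<and>
     g_length_is h X Y T L \<and>
     0 < L \<and> L = s * T \<and> L \<le> 4 * s"
proof (intro exI conjI ballI)
  show "geodesic_flow_curve h X Y Xi Eta return_time"
    by (rule geodesic)
  show "g_length_is h X Y return_time (s * return_time)"
    by (rule length)
  show "\<And>t. t \<in> {0<..<return_time} \<Longrightarrow> 0 < X t"
    using u_pos s_pos by (simp add: X_def)
qed (use initial_values return_time return_time_bounds s_pos in \<open>auto simp: X_def Xi_def\<close>)

end

section \<open>Short geodesics return within time 4\<close>

lemma gas_giant_family_imp_collar:
  assumes "gas_giant_family h x0"
  shows "\<exists>c Dh. gas_giant_collar h x0 c Dh"
proof -
  obtain c where c: "0 < c" "\<forall>x\<in>{0..x0}. \<forall>y v. c * (norm v)^2 \<le> v \<bullet> (h x y *v v)"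
    using assms unfolding gas_giant_family_def by blast
  have "\<forall>p. smooth_bdd_on ({0..x0} \<times> UNIV) (\<lambda>(x, y). h x y $ fst p $ snd p)"
    using assms unfolding gas_giant_family_def by blast
  then obtain F where F: "\<And>p. (\<forall>z\<in>{0..x0} \<times> UNIV. F p [] z = (\<lambda>(x, y). h x y $ fst p $ snd p) z) \<and>
      (\<forall>vs. \<forall>z\<in>{0..x0} \<times> UNIV. (F p vs has_derivative (\<lambda>w. F p (w # vs) z)) (at z within {0..x0} \<times> UNIV)) \<and>
      (\<forall>vs. \<exists>B. \<forall>z\<in>{0..x0} \<times> UNIV. \<bar>F p vs z\<bar> \<le> B * prod_list (map norm vs))"
    unfolding smooth_bdd_on_def by metis
  have "gas_giant_collar h x0 c (\<lambda>i j. F (i, j))"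
  proof
    show "0 < x0" "0 < c" "\<And>x y. x \<in> {0..x0} \<Longrightarrow> transpose (h x y) = h x y"
      using assms c(1) unfolding gas_giant_family_def by auto
  qed (use c(2) F in auto)
  then show ?thesis
    by blast
qed

lemma (in gas_giant_collar) short_geodesic_exists:
  fixes B K s :: real
  assumes "conorm2 h 0 y0 e0 = 1"
    and "\<And>i w. \<bar>clamped_velocity e0 i w\<bar> \<le> B" "\<And>m w. \<bar>clamped_dy e0 m w\<bar> \<le> B"
    "\<And>w. \<bar>clamped_dx e0 w\<bar> \<le> B" "K-lipschitz_on UNIV (clamped_conorm2 e0)"
    and "0 < s" "s \<le> 1" "2 * s < x0" "16 * CARD('n) * B * s < 1"
    "s * (K * (2 + 32 * CARD('n) * B) + B) \<le> exp (-12) / 100"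
  shows "\<exists>\<phi>. short_geodesic h x0 c Dh y0 e0 B K s \<phi>"
proof -
  obtain L where "L-lipschitz_on UNIV (rescaled_field s e0)"
    using rescaled_field_lipschitz by blast
  then have "\<exists>\<phi>. \<phi> 0 = (0, 1, y0, e0) \<and> continuous_on {0..4} \<phi> \<and>
      (\<forall>t\<in>{0..4}. (\<phi> has_vector_derivative rescaled_field s e0 (\<phi> t)) (at t within {0..4}))"
    by (rule lipschitz_ode_solution) simp
  then obtain \<phi> where "\<phi> 0 = (0, 1, y0, e0)" "continuous_on {0..4} \<phi>"
    "\<forall>t\<in>{0..4}. (\<phi> has_vector_derivative rescaled_field s e0 (\<phi> t)) (at t within {0..4})"
    by blast
  then have "short_geodesic h x0 c Dh y0 e0 B K s \<phi>"
    using assms by (intro short_geodesic.intro gas_giant_collar_axioms short_geodesic_axioms.intro) simp_all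
  then show ?thesis
    by blast
qed

lemma (in gas_giant_collar) short_geodesics_return:
  assumes unit: "conorm2 h 0 y0 e0 = 1"
  shows "\<exists>s0>0. \<forall>s. 0 < s \<and> s < s0 \<longrightarrow>
    (\<exists>T X Y Xi E L. geodesic_flow_curve h X Y Xi E T \<and>
       X 0 = 0 \<and> Y 0 = y0 \<and> Xi 0 = s \<and> E 0 = e0 \<and>
       (\<forall>t\<in>{0<..<T}. 0 < X t) \<and> X T = 0 \<and>
       0 < T \<and> T \<le> 4 \<and>
       g_length_is h X Y T L \<and>
       0 < L \<and> L = s * T \<and> L \<le> 4 * s)"
proof -
  obtain B K where bounds: "\<And>i w. \<bar>clamped_velocity e0 i w\<bar> \<le> B" "\<And>m w. \<bar>clamped_dy e0 m w\<bar> \<le> B"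
    "\<And>w. \<bar>clamped_dx e0 w\<bar> \<le> B" "K-lipschitz_on UNIV (clamped_conorm2 e0)"
    using clamped_coefficients_bounds by blast
  define D where "D = 16 * CARD('n) * B"
  define E where "E = K * (2 + 32 * CARD('n) * B) + B"
  have "0 \<le> B" "0 \<le> K"
    using bounds(3)[of undefined] lipschitz_on_nonneg[OF bounds(4)] by auto
  then have DE: "0 \<le> D" "0 \<le> E"
    by (simp_all add: D_def E_def)
  define s0 where "s0 = min 1 (min (x0 / 2) (min (1 / (D + 1)) (exp (-12) / (100 * (E + 1)))))"
  have exists: "\<exists>\<phi>. short_geodesic h x0 c Dh y0 e0 B K s \<phi>" if "0 < s" "s < s0" for s
  proof (rule short_geodesic_exists[OF unit bounds \<open>0 < s\<close>])
    have "s < 1" "s < x0 / 2" "s < 1 / (D + 1)" "s < exp (-12) / (100 * (E + 1))"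
      using that by (simp_all add: s0_def)
    then have "s < 1" "s < x0 / 2" "s * (D + 1) < 1" "s * (100 * (E + 1)) < exp (-12)"
      using DE by (simp_all add: pos_less_divide_eq)
    then show "s \<le> 1" "2 * s < x0" "16 * CARD('n) * B * s < 1"
      "s * (K * (2 + 32 * CARD('n) * B) + B) \<le> exp (-12) / 100"
      using that DE by (simp_all add: D_def E_def algebra_simps)
  qed
  show ?thesis
  proof (rule exI[of _ s0], intro conjI allI impI)
    show "0 < s0"
      using x0_pos DE by (simp add: s0_def)
    fix s assume "0 < s \<and> s < s0"
    then obtain \<phi> where "short_geodesic h x0 c Dh y0 e0 B K s \<phi>"
      using exists by blast
    then show "\<exists>T X Y Xi E L. geodesic_flow_curve h X Y Xi E T \<and>
       X 0 = 0 \<and> Y 0 = y0 \<and> Xi 0 = s \<and> E 0 = e0 \<and>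
       (\<forall>t\<in>{0<..<T}. 0 < X t) \<and> X T = 0 \<and>
       0 < T \<and> T \<le> 4 \<and>
       g_length_is h X Y T L \<and>
       0 < L \<and> L = s * T \<and> L \<le> 4 * s"
      by (rule short_geodesic.returns_to_boundary)
  qed
qed

theorem lemma5p3:
  fixes h :: "real \<Rightarrow> real^'n \<Rightarrow> real^'n^'n" and x0 :: real
  assumes "gas_giant_family h x0"
  shows "\<exists>C>0. \<forall>(y::real^'n) (\<eta>::real^'n). conorm2 h 0 y \<eta> = 1 \<longrightarrow>
           (\<exists>s0>0. \<forall>s. 0 < s \<and> s < s0 \<longrightarrow>
              (\<exists>T X Y Xi E L.
                  geodesic_flow_curve h X Y Xi E T \<and>
                  X 0 = 0 \<and> Y 0 = y \<and> Xi 0 = s \<and> E 0 = \<eta> \<and>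
                  (\<forall>t\<in>{0<..<T}. 0 < X t) \<and> X T = 0 \<and>
                  0 < T \<and> T \<le> C \<and>
                  g_length_is h X Y T L \<and>
                  0 < L \<and> L = s * T \<and> L \<le> C * s))"
proof -
  obtain c Dh where "gas_giant_collar h x0 c Dh"
    using gas_giant_family_imp_collar[OF assms] by blast
  then interpret gas_giant_collar h x0 c Dh .
  show ?thesis
    using short_geodesics_return by (intro exI[of _ 4]) auto
qed

end
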